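(* Let $N\ge K\ge1$, $\mathbf{H}\in\mathbb{R}^{N\times K}$ full column rank with orthonormal eigenvectors $\mathbf{u}_1,\ldots,\mathbf{u}_N$ of $\mathbf{H}\mathbf{H}^T$, $\mathbf{H}\mathbf{H}^T\mathbf{u}_i=\rho_i^2\mathbf{u}_i$, $\rho_1^2\ge\cdots\ge\rho_N^2\ge0$, $\rho_1^2>\rho_N^2$. Fix positive integers $M_1,M_2$ with $M=M_1+M_2\le N$, a positive integer $N_b$, $\sigma_x^2,\sigma_0^2>0$ and $P_{FA}\in(0,1)$, and set $\gamma=\mathbb{Q}_{F(M_1N_b,M_2N_b)}^{-1}(P_{FA})$. For $\boldsymbol{\Phi}=[\boldsymbol{\Phi}_s^T,\boldsymbol{\Phi}_o^T]^T\in\mathbb{R}^{M\times N}$ with $\boldsymbol{\Phi}_s\in\mathbb{R}^{M_1\times N}$, $\boldsymbol{\Phi}_o\in\mathbb{R}^{M_2\times N}$ and $\boldsymbol{\Phi}\boldsymbol{\Phi}^T=\frac1M\mathbf{I}_M$, define $$\tilde\eta_{lb}(\boldsymbol{\Phi})=\frac{\sigma_0^2+\sigma_x^2\lambda_1(\mathbf{H}^T\boldsymbol{\Phi}_o^T\boldsymbol{\Phi}_o\mathbf{H})}{\sigma_0^2+\sigma_x^2\lambda_{M_1}(\mathbf{H}^T\boldsymbol{\Phi}_s^T\boldsymbol{\Phi}_s\mathbf{H})},\qquad \tilde\eta_{ub}(\boldsymbol{\Phi})=\frac{\sigma_0^2+\sigma_x^2\lambda_{M_2}(\mathbf{H}^T\boldsymbol{\Phi}_o^T\boldsymbol{\Phi}_o\mathbf{H})}{\sigma_0^2+\sigma_x^2\lambda_{1}(\mathbf{H}^T\boldsymbol{\Phi}_s^T\boldsymbol{\Phi}_s\mathbf{H})},$$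 and $P_{D,lb}(\boldsymbol{\Phi})=\mathbb{Q}_{F(M_1N_b,M_2N_b)}(\tilde\eta_{lb}(\boldsymbol{\Phi})\gamma)$, $P_{D,ub}(\boldsymbol{\Phi})=\mathbb{Q}_{F(M_1N_b,M_2N_b)}(\tilde\eta_{ub}(\boldsymbol{\Phi})\gamma)$. Then the design $\boldsymbol{\Phi}_s=\frac1{\sqrt M}\mathbf{T}_s[\mathbf{u}_1,\ldots,\mathbf{u}_{M_1}]^T$, $\boldsymbol{\Phi}_o=\frac1{\sqrt M}\mathbf{T}_o[\mathbf{u}_{N-M_2+1},\ldots,\mathbf{u}_N]^T$, with $\mathbf{T}_s,\mathbf{T}_o$ any orthogonal matrices of sizes $M_1\times M_1$ and $M_2\times M_2$, simultaneously maximizes $P_{D,lb}(\boldsymbol{\Phi})$ and $P_{D,ub}(\boldsymbol{\Phi})$ over all such $\boldsymbol{\Phi}$.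
   Context: $\mathbb{Q}_{F(d_1,d_2)}(x)=\Pr(X>x)$ for $X$ $F$-distributed with $(d_1,d_2)$ degrees of freedom; it is continuous and strictly decreasing on $(0,\infty)$, and $\mathbb{Q}^{-1}_{F(d_1,d_2)}$ denotes its inverse. For a symmetric matrix $\mathbf{A}$, $\lambda_i(\mathbf{A})$ is its $i$-th largest eigenvalue, with the convention $\lambda_i(\mathbf{A})=0$ if $i$ exceeds the size of $\mathbf{A}$. In the paper, $P_{D,lb}$ and $P_{D,ub}$ are the expressions used as lower and upper bounds on the detection probability of the energy-ratio test with measurement matrix $\boldsymbol{\Phi}$ and false-alarm probability $P_{FA}$. *)

theory Defs
  imports "HOL-Probability.Probability" "HOL-Computational_Algebra.Polynomial"
    "Jordan_Normal_Form.Char_Poly" "Jordan_Normal_Form.DL_Rank"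
begin

definition F_density :: "nat \<Rightarrow> nat \<Rightarrow> real \<Rightarrow> real" where
  "F_density d1 d2 t =
     (if t > 0 then
        (real d1 / real d2) powr (real d1 / 2) * t powr (real d1 / 2 - 1)
        * (1 + real d1 * t / real d2) powr (- (real d1 + real d2) / 2)
        / Beta (real d1 / 2) (real d2 / 2)
      else 0)"

definition QF :: "nat \<Rightarrow> nat \<Rightarrow> real \<Rightarrow> real" where
  "QF d1 d2 x = (LINT t:{x<..}|lborel. F_density d1 d2 t)"

definition QF_inv :: "nat \<Rightarrow> nat \<Rightarrow> real \<Rightarrow> real" where
  "QF_inv d1 d2 p = (THE x. x > 0 \<and> QF d1 d2 x = p)"

text \<open>Eigenvalues (with multiplicity, as roots of the characteristic polynomial) in
  non-increasing order; lambda i A is the i-th largest (1-based), 0 if i exceeds the size.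
  For symmetric real matrices the characteristic polynomial splits over the reals.\<close>
definition eigs_desc :: "real mat \<Rightarrow> real list" where
  "eigs_desc A = rev (sorted_list_of_multiset (proots (char_poly A)))"

definition lambda :: "nat \<Rightarrow> real mat \<Rightarrow> real" where
  "lambda i A = (if 1 \<le> i \<and> i \<le> dim_row A then eigs_desc A ! (i - 1) else 0)"

definition eta_lb :: "real mat \<Rightarrow> real \<Rightarrow> real \<Rightarrow> nat \<Rightarrow> nat \<Rightarrow> real mat \<Rightarrow> real mat \<Rightarrow> real" where
  "eta_lb H sx2 s02 M1 M2 Phis Phio =
     (s02 + sx2 * lambda 1 (transpose_mat H * transpose_mat Phio * Phio * H)) /
     (s02 + sx2 * lambda M1 (transpose_mat H * transpose_mat Phis * Phis * H))"

definition eta_ub :: "real mat \<Rightarrow> real \<Rightarrow> real \<Rightarrow> nat \<Rightarrow> nat \<Rightarrow> real mat \<Rightarrow> real mat \<Rightarrow> real" where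
  "eta_ub H sx2 s02 M1 M2 Phis Phio =
     (s02 + sx2 * lambda M2 (transpose_mat H * transpose_mat Phio * Phio * H)) /
     (s02 + sx2 * lambda 1 (transpose_mat H * transpose_mat Phis * Phis * H))"

definition PD_lb :: "real mat \<Rightarrow> real \<Rightarrow> real \<Rightarrow> nat \<Rightarrow> nat \<Rightarrow> nat \<Rightarrow> real \<Rightarrow> real mat \<Rightarrow> real mat \<Rightarrow> real" where
  "PD_lb H sx2 s02 M1 M2 Nb PFA Phis Phio =
     QF (M1 * Nb) (M2 * Nb)
        (eta_lb H sx2 s02 M1 M2 Phis Phio * QF_inv (M1 * Nb) (M2 * Nb) PFA)"

definition PD_ub :: "real mat \<Rightarrow> real \<Rightarrow> real \<Rightarrow> nat \<Rightarrow> nat \<Rightarrow> nat \<Rightarrow> real \<Rightarrow> real mat \<Rightarrow> real mat \<Rightarrow> real" where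
  "PD_ub H sx2 s02 M1 M2 Nb PFA Phis Phio =
     QF (M1 * Nb) (M2 * Nb)
        (eta_ub H sx2 s02 M1 M2 Phis Phio * QF_inv (M1 * Nb) (M2 * Nb) PFA)"

definition admissible :: "nat \<Rightarrow> nat \<Rightarrow> nat \<Rightarrow> real mat \<Rightarrow> real mat \<Rightarrow> bool" where
  "admissible N M1 M2 Phis Phio \<longleftrightarrow>
     Phis \<in> carrier_mat M1 N \<and> Phio \<in> carrier_mat M2 N \<and>
     (Phis @\<^sub>r Phio) * transpose_mat (Phis @\<^sub>r Phio)
       = (1 / real (M1 + M2)) \<cdot>\<^sub>m 1\<^sub>m (M1 + M2)"

definition rows_of :: "nat \<Rightarrow> nat \<Rightarrow> nat \<Rightarrow> (nat \<Rightarrow> real vec) \<Rightarrow> real mat" where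
  "rows_of m N a u = mat m N (\<lambda>(i, j). u (a + i) $ j)"

end

theory Submission
  imports Defs "Jordan_Normal_Form.Schur_Decomposition"
begin

text \<open>Since \<open>\<Phi> \<Phi>\<^sup>T = I/M\<close>, the quadratic form of \<open>H\<^sup>T \<Phi>\<^sup>T \<Phi> H\<close> at \<open>x\<close> is \<open>1/M\<close> times the squared
  length of the projection of \<open>H x\<close> onto the row space of \<open>\<Phi>\<close>. Courant--Fischer therefore compares
  its eigenvalues with those of \<open>H H\<^sup>T\<close>: for every admissible \<open>\<Phi>\<close> and \<open>p \<le> M\<^sub>1\<close>,
  \<open>\<lambda>\<^sub>p(H\<^sup>T \<Phi>\<^sub>s\<^sup>T \<Phi>\<^sub>s H) \<le> \<rho>\<^sub>p\<^sup>2/M\<close>, while \<open>\<lambda>\<^sub>1(H\<^sup>T \<Phi>\<^sub>o\<^sup>T \<Phi>\<^sub>o H) \<ge> \<rho>\<^sub>i\<^sup>2/M\<close> with \<open>i = N - M\<^sub>2 + 1\<close> and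
  \<open>\<lambda>\<^sub>M\<^sub>2(H\<^sup>T \<Phi>\<^sub>o\<^sup>T \<Phi>\<^sub>o H) \<ge> \<rho>\<^sub>N\<^sup>2/M\<close>. The eigenvector design attains all of these bounds, so it
  makes the numerators of both ratios \<open>\<eta>\<close> as small and their denominators as large as possible;
  since \<open>Q\<^sub>F\<close> is decreasing, it maximises both detection probabilities.\<close>

section \<open>Spectral theorem for real symmetric matrices\<close>

lemma scalar_prod_self_gt_0: "(v :: real vec) \<in> carrier_vec n \<Longrightarrow> v \<noteq> 0\<^sub>v n \<Longrightarrow> v \<bullet> v > 0"
  using conjugate_square_greater_0_vec[of v n] by simp

lemma scalar_prod_self_ge_0: "(v :: real vec) \<bullet> v \<ge> 0"
  using conjugate_square_ge_0_vec[of v] by simp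

lemma scalar_prod_self_eq_sum: "(a :: real vec) \<bullet> a = (\<Sum>i<dim_vec a. (a $ i)\<^sup>2)"
  by (simp add: scalar_prod_def power2_eq_square lessThan_atLeast0)

lemma orthogonal_mat_transpose_right:
  fixes W :: "real mat"
  assumes "W \<in> carrier_mat n n" "transpose_mat W * W = 1\<^sub>m n"
  shows "W * transpose_mat W = 1\<^sub>m n"
  by (rule mat_mult_left_right_inverse[of "transpose_mat W" n W], insert assms, auto)

lemma orthogonal_mat_mult_vec_cancel:
  fixes Q :: "real mat"
  assumes "Q \<in> carrier_mat n n" "transpose_mat Q * Q = 1\<^sub>m n" "b \<in> carrier_vec n"
  shows "transpose_mat Q *\<^sub>v (Q *\<^sub>v b) = b"
  using assms by (simp add: assoc_mult_mat_vec[symmetric, of _ n n _ n])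

lemma real_symmetric_eigenvalue_real:
  fixes A :: "real mat" and a :: complex
  assumes A: "A \<in> carrier_mat n n" and sym: "transpose_mat A = A"
    and ev: "eigenvalue (map_mat complex_of_real A) a"
  shows "a \<in> \<real>"
proof -
  let ?A = "map_mat complex_of_real A"
  from ev obtain v where v: "v \<in> carrier_vec n" "v \<noteq> 0\<^sub>v n" and Av: "?A *\<^sub>v v = a \<cdot>\<^sub>v v"
    unfolding eigenvalue_def eigenvector_def using A by auto
  define s where "s = (\<Sum>i<n. cnj (v $ i) * (?A *\<^sub>v v) $ i)"
  define r where "r = (\<Sum>i<n. cmod (v $ i) ^ 2)"
  have s_expand: "s = (\<Sum>i<n. \<Sum>j<n. cnj (v $ i) * of_real (A $$ (i, j)) * v $ j)"
    unfolding s_def using A v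
    by (auto simp: scalar_prod_def sum_distrib_left mult.assoc intro!: sum.cong)
  have symA: "\<And>i j. i < n \<Longrightarrow> j < n \<Longrightarrow> A $$ (j, i) = A $$ (i, j)"
    using sym A by (metis carrier_matD index_transpose_mat(1))
  have "cnj s = (\<Sum>i<n. \<Sum>j<n. v $ i * of_real (A $$ (i, j)) * cnj (v $ j))"
    unfolding s_expand by (simp add: mult.assoc)
  also have "\<dots> = (\<Sum>j<n. \<Sum>i<n. v $ i * of_real (A $$ (i, j)) * cnj (v $ j))"
    by (rule sum.swap)
  also have "\<dots> = s" unfolding s_expand
    by (intro sum.cong refl, simp add: symA mult.commute mult.left_commute)
  finally have s_real: "cnj s = s" .
  have "s = a * (\<Sum>i<n. cnj (v $ i) * v $ i)"
    unfolding s_def Av using v by (auto simp: sum_distrib_left mult.commute mult.left_commute)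
  also have "(\<Sum>i<n. cnj (v $ i) * v $ i) = of_real r"
    unfolding r_def of_real_sum of_real_power
    by (intro sum.cong refl, metis complex_norm_square mult.commute of_real_power)
  finally have s_eq: "s = a * of_real r" .
  from v obtain i where i: "i < n" "v $ i \<noteq> 0"
    by (metis carrier_vecD eq_vecI index_zero_vec(1) index_zero_vec(2))
  have "0 < cmod (v $ i) ^ 2" using i by auto
  also have "\<dots> \<le> r" unfolding r_def by (rule member_le_sum, insert i, auto)
  finally have "cnj a = a" using s_real s_eq by simp
  thus ?thesis by (metis Reals_cnj_iff)
qed

interpretation of_real_poly_hom: map_poly_inj_comm_ring_hom complex_of_real ..

lemma map_poly_of_real_prod_linear:
  "map_poly complex_of_real (\<Prod>e\<leftarrow>es. [:-e,1:]) = (\<Prod>e\<leftarrow>es. [:-complex_of_real e,1:])"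
  by (induct es) (simp_all add: of_real_poly_hom.hom_mult del: mult_pCons_left mult_pCons_right)

lemma char_poly_real_symmetric_splits:
  fixes A :: "real mat"
  assumes A: "A \<in> carrier_mat n n" and sym: "transpose_mat A = A"
  obtains es where "char_poly A = (\<Prod>a\<leftarrow>es. [:-a,1:])"
proof -
  let ?A = "map_mat complex_of_real A"
  have A': "?A \<in> carrier_mat n n" using A by auto
  from char_poly_factorized[OF A'] obtain as where
    cf: "char_poly ?A = (\<Prod>a\<leftarrow>as. [:- a, 1:])" by auto
  have real: "a = complex_of_real (Re a)" if a: "a \<in> set as" for a
  proof -
    have "poly (char_poly ?A) a = 0" unfolding cf poly_prod_list_zero_iff using a by auto
    hence "eigenvalue ?A a" using eigenvalue_root_char_poly[OF A'] by auto
    from real_symmetric_eigenvalue_real[OF A sym this] show ?thesis by (simp add: complex_eq_iff Reals_def)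
  qed
  have "map_poly complex_of_real (char_poly A) = char_poly ?A"
    by (rule of_real_hom.char_poly_hom[OF A, symmetric])
  also have "\<dots> = (\<Prod>a\<leftarrow>map (\<lambda>e. complex_of_real (Re e)) as. [:- a, 1:])"
    unfolding cf by (rule arg_cong[where f = prod_list], insert real, auto)
  also have "\<dots> = map_poly complex_of_real (\<Prod>e\<leftarrow>map Re as. [:-e,1:])"
    unfolding map_poly_of_real_prod_linear by (simp add: o_def)
  finally have "char_poly A = (\<Prod>e\<leftarrow>map Re as. [:-e,1:])"
    by (rule of_real_poly_hom.injectivity)
  thus thesis by (rule that)
qed

lemma orthonormal_mat_of_orthogonal_cols:
  fixes ws :: "real vec list"
  assumes ws: "set ws \<subseteq> carrier_vec n" "corthogonal ws" "length ws = n"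
  defines "W \<equiv> mat_of_cols n (map (\<lambda>w. (1 / sqrt (w \<bullet> w)) \<cdot>\<^sub>v w) ws)"
  shows "transpose_mat W * W = 1\<^sub>m n"
proof (rule eq_matI)
  fix i j assume "i < dim_row (1\<^sub>m n)" "j < dim_col (1\<^sub>m n)"
  hence i: "i < n" and j: "j < n" by auto
  have wsi: "ws ! k \<in> carrier_vec n" if "k < n" for k using ws that by auto
  have col: "col W k = (1 / sqrt (ws ! k \<bullet> ws ! k)) \<cdot>\<^sub>v ws ! k" if "k < n" for k
    unfolding W_def using that ws wsi[OF that] by auto
  have orth: "(ws ! i \<bullet> ws ! j = 0) = (i \<noteq> j)"
    using corthogonalD[OF ws(2), of i j] i j ws by simp
  have pos: "ws ! i \<bullet> ws ! i > 0"
    using corthogonalD[OF ws(2), of i i] i ws scalar_prod_self_ge_0[of "ws ! i"] by simp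
  have "(transpose_mat W * W) $$ (i, j) = col W i \<bullet> col W j"
    using i j ws by (simp add: W_def)
  also have "\<dots> = (ws ! i \<bullet> ws ! j) / (sqrt (ws ! i \<bullet> ws ! i) * sqrt (ws ! j \<bullet> ws ! j))"
    unfolding col[OF i] col[OF j] using wsi[OF i] wsi[OF j] by simp
  also have "\<dots> = 1\<^sub>m n $$ (i, j)"
    using orth pos i j by (cases "i = j") (simp_all add: real_sqrt_mult[symmetric])
  finally show "(transpose_mat W * W) $$ (i, j) = 1\<^sub>m n $$ (i, j)" .
qed (auto simp: W_def assms)

lemma orthonormal_completion:
  fixes v :: "real vec"
  assumes v: "v \<in> carrier_vec n" and v1: "v \<bullet> v = 1"
  obtains W where "W \<in> carrier_mat n n" "transpose_mat W * W = 1\<^sub>m n" "col W 0 = v"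
proof -
  have v0: "v \<noteq> 0\<^sub>v n" using v v1 by auto
  have n0: "0 < n" using v v1 by (cases n, auto simp: scalar_prod_def)
  interpret cof_vec_space n "TYPE(real)" .
  define b where "b = basis_completion v"
  from basis_completion[OF v v0, folded b_def]
  have b: "set b \<subseteq> carrier_vec n" "distinct b" "\<not> lin_dep (set b)" "length b = n" "hd b = v"
    by auto
  define ws where "ws = gram_schmidt n b"
  from gram_schmidt_result[OF b(1-3) ws_def]
  have ws: "set ws \<subseteq> carrier_vec n" "corthogonal ws" "length ws = n" by (auto simp: b(4))
  obtain vs where "b = v # vs" using b(4,5) n0 by (cases b, auto)
  hence "hd ws = v" unfolding ws_def using v by simp
  hence "ws ! 0 = v" using ws(3) n0 by (cases ws, auto)
  define W where "W = mat_of_cols n (map (\<lambda>w. (1 / sqrt (w \<bullet> w)) \<cdot>\<^sub>v w) ws)"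
  have "col W 0 = (1 / sqrt (v \<bullet> v)) \<cdot>\<^sub>v v"
    unfolding W_def using ws n0 v \<open>ws ! 0 = v\<close> by (subst col_mat_of_cols, auto)
  with ws v1 show thesis
    by (intro that[of W], unfold W_def, auto intro!: orthonormal_mat_of_orthogonal_cols)
qed

lemma real_symmetric_top_eigenvector:
  fixes A :: "real mat"
  assumes A: "A \<in> carrier_mat n n" and sym: "transpose_mat A = A" and n: "0 < n"
  obtains mu :: real and v :: "real vec" where "v \<in> carrier_vec n" "v \<bullet> v = 1" "A *\<^sub>v v = mu \<cdot>\<^sub>v v"
    "\<And>x. eigenvalue A x \<Longrightarrow> x \<le> mu"
proof -
  obtain es where cpA: "char_poly A = (\<Prod>a\<leftarrow>es. [:-a,1:])"
    using char_poly_real_symmetric_splits[OF A sym] .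
  have roots: "set es = {x. eigenvalue A x}"
    unfolding eigenvalue_root_char_poly[OF A] cpA poly_prod_list_zero_iff by auto
  with degree_monic_char_poly[OF A] cpA n have "es \<noteq> []" by auto
  define mu where "mu = Max (set es)"
  have mu: "eigenvalue A mu" using roots \<open>es \<noteq> []\<close> unfolding mu_def by (metis Max_in finite_set mem_Collect_eq set_empty)
  have mu_max: "x \<le> mu" if "eigenvalue A x" for x
    using roots that unfolding mu_def by (metis List.finite_set Max_ge mem_Collect_eq)
  obtain w where w: "w \<in> carrier_vec n" "w \<noteq> 0\<^sub>v n" and Aw: "A *\<^sub>v w = mu \<cdot>\<^sub>v w"
    using mu A unfolding eigenvalue_def eigenvector_def by auto
  define v where "v = (1 / sqrt (w \<bullet> w)) \<cdot>\<^sub>v w"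
  have "v \<in> carrier_vec n" "v \<bullet> v = 1"
    unfolding v_def using w scalar_prod_self_gt_0[OF w] by (auto simp: field_simps)
  moreover have "A *\<^sub>v v = mu \<cdot>\<^sub>v v" unfolding v_def using A w Aw
    by (simp add: mult_mat_vec smult_smult_assoc mult.commute)
  ultimately show thesis using that mu_max by blast
qed

lemma orthogonal_mat_mult:
  fixes W Q D :: "real mat"
  assumes W: "W \<in> carrier_mat n n" "transpose_mat W * W = 1\<^sub>m n"
    and Q: "Q \<in> carrier_mat n n" "transpose_mat Q * Q = 1\<^sub>m n" and D: "D \<in> carrier_mat n n"
  shows "transpose_mat (W * Q) * (W * Q) = 1\<^sub>m n"
    "W * (Q * D * transpose_mat Q) * transpose_mat W = (W * Q) * D * transpose_mat (W * Q)"
proof -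
  have "transpose_mat (W * Q) * (W * Q) = transpose_mat Q * ((transpose_mat W * W) * Q)"
    using W(1) Q(1) by (simp add: transpose_mult[of _ n n] assoc_mult_mat[of _ n n _ n _ n])
  thus "transpose_mat (W * Q) * (W * Q) = 1\<^sub>m n" using W Q by simp
  show "W * (Q * D * transpose_mat Q) * transpose_mat W = (W * Q) * D * transpose_mat (W * Q)"
    using W Q D by (simp add: transpose_mult[of _ n n] assoc_mult_mat[of _ n n _ n _ n]
        mult_carrier_mat[of _ n n _ n])
qed

lemma orthogonal_conj_mat:
  fixes A W :: "real mat"
  assumes A: "A \<in> carrier_mat n n" and W: "W \<in> carrier_mat n n" and WW: "transpose_mat W * W = 1\<^sub>m n"
  shows "A = W * (transpose_mat W * A * W) * transpose_mat W"
    "char_poly A = char_poly (transpose_mat W * A * W)"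
    "transpose_mat A = A \<Longrightarrow> transpose_mat (transpose_mat W * A * W) = transpose_mat W * A * W"
proof -
  have WW': "W * transpose_mat W = 1\<^sub>m n" by (rule orthogonal_mat_transpose_right[OF W WW])
  have "W * (transpose_mat W * A * W) * transpose_mat W = (W * transpose_mat W) * A * (W * transpose_mat W)"
    using W A by (simp add: assoc_mult_mat[of _ n n _ n _ n])
  thus AC: "A = W * (transpose_mat W * A * W) * transpose_mat W" using WW' A by simp
  show "char_poly A = char_poly (transpose_mat W * A * W)"
    by (intro char_poly_similar similar_matI[OF _ _ _ AC]) (use A W WW WW' in auto)
  assume sym: "transpose_mat A = A"
  have "transpose_mat (transpose_mat W * A * W) = transpose_mat W * transpose_mat (transpose_mat W * A)"
    using W A by (subst transpose_mult[of _ n n]) auto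
  also have "transpose_mat (transpose_mat W * A) = A * W"
    using W A sym by (subst transpose_mult[of _ n n]) auto
  finally show "transpose_mat (transpose_mat W * A * W) = transpose_mat W * A * W"
    using W A by (simp add: assoc_mult_mat[of _ n n _ n _ n])
qed

lemma symmetric_deflation:
  fixes A W :: "real mat"
  assumes A: "A \<in> carrier_mat (Suc m) (Suc m)" and sym: "transpose_mat A = A"
    and W: "W \<in> carrier_mat (Suc m) (Suc m)" and WW: "transpose_mat W * W = 1\<^sub>m (Suc m)"
    and eig: "A *\<^sub>v col W 0 = mu \<cdot>\<^sub>v col W 0"
  obtains B where "B \<in> carrier_mat m m" "transpose_mat B = B"
    "A = W * four_block_mat (mat 1 1 (\<lambda>_. mu)) (0\<^sub>m 1 m) (0\<^sub>m m 1) B * transpose_mat W"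
    "char_poly A = [:-mu, 1:] * char_poly B"
proof -
  let ?n = "Suc m"
  define C where "C = transpose_mat W * A * W"
  have C: "C \<in> carrier_mat ?n ?n" unfolding C_def using W A by auto
  note conj = orthogonal_conj_mat[OF A W WW, folded C_def]
  have symC: "transpose_mat C = C" using conj(3)[OF sym] .
  have col0: "C $$ (i, 0) = (if i = 0 then mu else 0)" if i: "i < ?n" for i
  proof -
    have "C $$ (i, 0) = row (transpose_mat W) i \<bullet> col (A * W) 0"
      unfolding C_def using W A i by (simp add: assoc_mult_mat[of _ ?n ?n _ ?n _ ?n])
    also have "col (A * W) 0 = mu \<cdot>\<^sub>v col W 0" using A W eig by (subst col_mult2) auto
    also have "row (transpose_mat W) i \<bullet> (mu \<cdot>\<^sub>v col W 0) = mu * (transpose_mat W * W) $$ (i, 0)"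
      using W i by simp
    finally show ?thesis unfolding WW using i by simp
  qed
  have row0: "C $$ (0, j) = (if j = 0 then mu else 0)" if j: "j < ?n" for j
    using col0[OF j] arg_cong[OF symC, of "\<lambda>M. M $$ (j, 0)"] C j by simp
  define B where "B = mat m m (\<lambda>(i, j). C $$ (i + 1, j + 1))"
  have blocks: "C = four_block_mat (mat 1 1 (\<lambda>_. mu)) (0\<^sub>m 1 m) (0\<^sub>m m 1) B"
    unfolding B_def using C col0 row0 by (intro eq_matI) auto
  have B: "B \<in> carrier_mat m m" unfolding B_def by simp
  have symB: "transpose_mat B = B"
  proof (rule eq_matI)
    fix i j assume "i < dim_row B" "j < dim_col B"
    hence "i < m" "j < m" using B by auto
    thus "transpose_mat B $$ (i, j) = B $$ (i, j)"
      unfolding B_def using arg_cong[OF symC, of "\<lambda>M. M $$ (i + 1, j + 1)"] C by simp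
  qed (use B in auto)
  have "char_poly A = char_poly C" by (rule conj(2))
  also have "char_poly C = char_poly (mat 1 1 (\<lambda>_. mu)) * char_poly B"
    unfolding blocks by (rule char_poly_four_block_zeros_col[OF _ _ B]) auto
  also have "char_poly (mat 1 1 (\<lambda>_. mu)) = [:-mu, 1:]"
    by (simp add: char_poly_defs det_def sign_def)
  finally show thesis using that[OF B symB] conj(1) blocks by metis
qed

lemma orthogonal_mat_four_block_one:
  fixes Q :: "real mat"
  assumes Q: "Q \<in> carrier_mat m m" and QQ: "transpose_mat Q * Q = 1\<^sub>m m"
    and D: "D \<in> carrier_mat m m"
  defines "Q' \<equiv> four_block_mat (1\<^sub>m 1) (0\<^sub>m 1 m) (0\<^sub>m m 1) Q"
  shows "Q' \<in> carrier_mat (Suc m) (Suc m)" "transpose_mat Q' * Q' = 1\<^sub>m (Suc m)"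
    "Q' * four_block_mat (mat 1 1 (\<lambda>_. mu)) (0\<^sub>m 1 m) (0\<^sub>m m 1) D * transpose_mat Q'
       = four_block_mat (mat 1 1 (\<lambda>_. mu)) (0\<^sub>m 1 m) (0\<^sub>m m 1) (Q * D * transpose_mat Q)"
proof -
  have tr: "transpose_mat Q' = four_block_mat (1\<^sub>m 1) (0\<^sub>m 1 m) (0\<^sub>m m 1) (transpose_mat Q)"
    unfolding Q'_def using Q by (subst transpose_four_block_mat, auto)
  show "Q' \<in> carrier_mat (Suc m) (Suc m)" unfolding Q'_def using Q by auto
  show "transpose_mat Q' * Q' = 1\<^sub>m (Suc m)"
    unfolding tr unfolding Q'_def using Q QQ
    by (subst mult_four_block_mat[of _ 1 1 _ m _ m _ _ 1 _ m], auto intro!: eq_matI)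
  show "Q' * four_block_mat (mat 1 1 (\<lambda>_. mu)) (0\<^sub>m 1 m) (0\<^sub>m m 1) D * transpose_mat Q'
       = four_block_mat (mat 1 1 (\<lambda>_. mu)) (0\<^sub>m 1 m) (0\<^sub>m m 1) (Q * D * transpose_mat Q)"
    unfolding tr unfolding Q'_def using Q D
    by (simp add: mult_four_block_mat[of _ 1 1 _ m _ m _ _ 1 _ m])
qed

lemma mat_diag_Cons:
  "mat_diag (Suc m) ((!) (mu # ds)) = four_block_mat (mat 1 1 (\<lambda>_. mu)) (0\<^sub>m 1 m) (0\<^sub>m m 1) (mat_diag m ((!) ds))"
  unfolding mat_diag_def by (rule eq_matI) auto

theorem real_symmetric_spectral_decomposition:
  fixes A :: "real mat"
  assumes "A \<in> carrier_mat n n" "transpose_mat A = A"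
  shows "\<exists>Q ds. Q \<in> carrier_mat n n \<and> transpose_mat Q * Q = 1\<^sub>m n \<and> length ds = n \<and>
    sorted (rev ds) \<and> A = Q * mat_diag n ((!) ds) * transpose_mat Q \<and> char_poly A = (\<Prod>a\<leftarrow>ds. [:-a,1:])"
  using assms
proof (induct n arbitrary: A)
  case 0
  hence A: "A \<in> carrier_mat 0 0" by auto
  from degree_monic_char_poly[OF A] have "char_poly A = 1"
    using degree_0_id[of "char_poly A"] by (simp add: one_pCons)
  thus ?case by (intro exI[of _ "1\<^sub>m 0"] exI[of _ "[]"]) (use A in \<open>auto intro!: eq_matI\<close>)
next
  case (Suc m A)
  have A: "A \<in> carrier_mat (Suc m) (Suc m)" and sym: "transpose_mat A = A" using Suc by auto
  obtain mu and v :: "real vec" where v: "v \<in> carrier_vec (Suc m)" "v \<bullet> v = 1" and Av: "A *\<^sub>v v = mu \<cdot>\<^sub>v v"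
    and mu_max: "\<And>x. eigenvalue A x \<Longrightarrow> x \<le> mu"
    using real_symmetric_top_eigenvector[OF A sym] by blast
  obtain W where W: "W \<in> carrier_mat (Suc m) (Suc m)" "transpose_mat W * W = 1\<^sub>m (Suc m)" "col W 0 = v"
    using orthonormal_completion[OF v] .
  obtain B where B: "B \<in> carrier_mat m m" "transpose_mat B = B"
    and WAW: "A = W * four_block_mat (mat 1 1 (\<lambda>_. mu)) (0\<^sub>m 1 m) (0\<^sub>m m 1) B * transpose_mat W"
    and cpB: "char_poly A = [:-mu, 1:] * char_poly B"
    using symmetric_deflation[OF A sym W(1,2)] Av W(3) by blast
  from Suc(1)[OF B] obtain Q ds where Q: "Q \<in> carrier_mat m m" "transpose_mat Q * Q = 1\<^sub>m m"
    and ds: "length ds = m" "sorted (rev ds)" and BQ: "B = Q * mat_diag m ((!) ds) * transpose_mat Q"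
    and cp: "char_poly B = (\<Prod>a\<leftarrow>ds. [:-a,1:])" by blast
  have cpA': "char_poly A = (\<Prod>a\<leftarrow>mu # ds. [:-a,1:])" unfolding cpB cp by simp
  have "d \<le> mu" if "d \<in> set ds" for d
    using mu_max that unfolding eigenvalue_root_char_poly[OF A] cpA' poly_prod_list_zero_iff by auto
  hence sorted: "sorted (rev (mu # ds))" using ds by (auto simp: sorted_append)
  define Q' where "Q' = four_block_mat (1\<^sub>m 1) (0\<^sub>m 1 m) (0\<^sub>m m 1) Q"
  note Q' = orthogonal_mat_four_block_one[OF Q mat_diag_dim, folded Q'_def]
  have "A = W * (Q' * mat_diag (Suc m) ((!) (mu # ds)) * transpose_mat Q') * transpose_mat W"
    unfolding WAW mat_diag_Cons BQ Q'(3) ..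
  with orthogonal_mat_mult[OF W(1,2) Q'(1,2) mat_diag_dim] show ?case using W Q' ds sorted cpA'
    by (intro exI[of _ "W * Q'"] exI[of _ "mu # ds"]) auto
qed

section \<open>Courant--Fischer bounds on the ordered eigenvalues\<close>

lemma proots_prod_linear: "proots (\<Prod>a\<leftarrow>ds. [:-a,1:]) = mset (ds :: real list)"
proof (induct ds)
  case (Cons a ds)
  have "(\<Prod>a\<leftarrow>ds. [:-a,1:]) \<noteq> (0 :: real poly)" unfolding prod_list_zero_iff by auto
  thus ?case using Cons by (simp add: proots_mult del: mult_pCons_left)
qed simp

lemma eigs_desc_eq:
  assumes "char_poly A = (\<Prod>a\<leftarrow>ds. [:-a,1:])" "sorted (rev ds)"
  shows "eigs_desc A = ds"
proof -
  have "sorted_list_of_multiset (proots (char_poly A)) = sort ds"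
    unfolding assms(1) proots_prod_linear by simp
  also have "sort ds = rev ds" by (rule properties_for_sort, insert assms(2), auto)
  finally show ?thesis unfolding eigs_desc_def by simp
qed

lemma lambda_spectral_decomposition:
  fixes A :: "real mat"
  assumes A: "A \<in> carrier_mat K K" and sym: "transpose_mat A = A"
  obtains Q ds where "Q \<in> carrier_mat K K" "transpose_mat Q * Q = 1\<^sub>m K" "length ds = K"
    "sorted (rev ds)" "A = Q * mat_diag K ((!) ds) * transpose_mat Q"
    "\<And>p. 1 \<le> p \<Longrightarrow> p \<le> K \<Longrightarrow> lambda p A = ds ! (p - 1)"
proof -
  from real_symmetric_spectral_decomposition[OF A sym] obtain Q ds where
    Q: "Q \<in> carrier_mat K K" "transpose_mat Q * Q = 1\<^sub>m K" "length ds = K" "sorted (rev ds)"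
      "A = Q * mat_diag K ((!) ds) * transpose_mat Q"
    and cp: "char_poly A = (\<Prod>a\<leftarrow>ds. [:-a,1:])" by blast
  have "eigs_desc A = ds" by (rule eigs_desc_eq[OF cp Q(4)])
  with A show thesis by (intro that[OF Q]) (auto simp: lambda_def)
qed

lemma mat_diag_mult_vec:
  assumes "a \<in> carrier_vec n"
  shows "mat_diag n f *\<^sub>v a = vec n (\<lambda>i. f i * a $ i)"
proof (rule eq_vecI)
  fix i assume "i < dim_vec (vec n (\<lambda>i. f i * a $ i))"
  hence i: "i < n" by simp
  have "(mat_diag n f *\<^sub>v a) $ i = (\<Sum>j\<in>{0..<n}. (if i = j then f j else 0) * a $ j)"
    using i assms unfolding mat_diag_def by (simp add: scalar_prod_def)
  also have "\<dots> = (\<Sum>j\<in>{0..<n}. if i = j then f i * a $ j else 0)" by (rule sum.cong) auto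
  finally show "(mat_diag n f *\<^sub>v a) $ i = vec n (\<lambda>i. f i * a $ i) $ i" using i by simp
qed (simp add: mat_diag_def)

lemma orthogonal_diag_quadratic_form:
  fixes Q :: "real mat"
  assumes Q: "Q \<in> carrier_mat K K" and QQ: "transpose_mat Q * Q = 1\<^sub>m K"
    and x: "x \<in> carrier_vec K"
  shows "x \<bullet> x = (transpose_mat Q *\<^sub>v x) \<bullet> (transpose_mat Q *\<^sub>v x)"
    "x \<bullet> ((Q * mat_diag K f * transpose_mat Q) *\<^sub>v x) = (\<Sum>i<K. f i * ((transpose_mat Q *\<^sub>v x) $ i)\<^sup>2)"
proof -
  let ?b = "transpose_mat Q *\<^sub>v x"
  have b: "?b \<in> carrier_vec K" using Q x by auto
  have x_eq: "x = Q *\<^sub>v ?b"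
    using Q x orthogonal_mat_transpose_right[OF Q QQ] by (simp add: assoc_mult_mat_vec[symmetric, of _ K K _ K])
  show "x \<bullet> x = ?b \<bullet> ?b"
    using transpose_vec_mult_scalar[OF Q b x] x_eq by simp
  have "x \<bullet> ((Q * mat_diag K f * transpose_mat Q) *\<^sub>v x) = x \<bullet> (Q *\<^sub>v (mat_diag K f *\<^sub>v ?b))"
    using Q x by (simp add: assoc_mult_mat_vec[of _ K K _ K])
  also have "\<dots> = ?b \<bullet> (mat_diag K f *\<^sub>v ?b)"
    using transpose_vec_mult_scalar[OF Q mult_mat_vec_carrier[OF mat_diag_dim b] x] by simp
  also have "\<dots> = (\<Sum>i<K. f i * (?b $ i)\<^sup>2)"
    using b by (simp add: mat_diag_mult_vec scalar_prod_def power2_eq_square lessThan_atLeast0 mult_ac)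
  finally show "x \<bullet> ((Q * mat_diag K f * transpose_mat Q) *\<^sub>v x) = (\<Sum>i<K. f i * (?b $ i)\<^sup>2)" .
qed

lemma exists_nonzero_orthogonal:
  fixes cs :: "real vec list"
  assumes cs: "set cs \<subseteq> carrier_vec p" and len: "length cs < p"
  obtains a where "a \<in> carrier_vec p" "a \<noteq> 0\<^sub>v p" "\<And>c. c \<in> set cs \<Longrightarrow> c \<bullet> a = 0"
proof -
  define c where "c = (\<lambda>i. if i < length cs then cs ! i else 0\<^sub>v p)"
  have cc: "c \<in> {0..<p} \<rightarrow> carrier_vec p" unfolding c_def using cs nth_mem by fastforce
  define M where "M = mat\<^sub>r p p (\<lambda>i. if i = p - 1 then 0\<^sub>v p else c i)"
  have M: "M \<in> carrier_mat p p" unfolding M_def by auto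
  have "det M = 0" unfolding M_def by (rule det_row_0[OF _ cc], use len in auto)
  with det_0_iff_vec_prod_zero_field[OF M] obtain a where a: "a \<in> carrier_vec p" "a \<noteq> 0\<^sub>v p"
    and Ma: "M *\<^sub>v a = 0\<^sub>v p" by auto
  have "cs ! i \<bullet> a = 0" if i: "i < length cs" for i
  proof -
    have "cs ! i \<bullet> a = (M *\<^sub>v a) $ i"
      unfolding M_def using i len cc a subsetD[OF cs nth_mem[OF i]] by (simp add: c_def)
    thus ?thesis using Ma i len by simp
  qed
  thus thesis using that[OF a] by (metis in_set_conv_nth)
qed

lemma sorted_weighted_sum_le:
  fixes ds :: "real list"
  assumes ds: "sorted (rev ds)" "length ds = K" and k: "k < K" and b: "\<And>i. i < k \<Longrightarrow> b i = 0"
  shows "(\<Sum>i<K. ds ! i * (b i)\<^sup>2) \<le> ds ! k * (\<Sum>i<K. (b i)\<^sup>2)"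
  unfolding sum_distrib_left
proof (rule sum_mono)
  fix i assume "i \<in> {..<K}"
  thus "ds ! i * (b i)\<^sup>2 \<le> ds ! k * (b i)\<^sup>2"
    using b[of i] sorted_rev_nth_mono[OF ds(1), of k i] ds(2) by (cases "i < k") (auto intro: mult_right_mono)
qed

lemma sorted_weighted_sum_ge:
  fixes ds :: "real list"
  assumes ds: "sorted (rev ds)" "length ds = K" and k: "k < K" and b: "\<And>i. k < i \<Longrightarrow> i < K \<Longrightarrow> b i = 0"
  shows "ds ! k * (\<Sum>i<K. (b i)\<^sup>2) \<le> (\<Sum>i<K. ds ! i * (b i)\<^sup>2)"
  unfolding sum_distrib_left
proof (rule sum_mono)
  fix i assume "i \<in> {..<K}"
  thus "ds ! k * (b i)\<^sup>2 \<le> ds ! i * (b i)\<^sup>2"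
    using b[of i] sorted_rev_nth_mono[OF ds(1), of i k] ds(2) k by (cases "k < i") (auto intro: mult_right_mono)
qed

lemma lambda_lower_bound:
  fixes A L :: "real mat"
  assumes A: "A \<in> carrier_mat K K" and sym: "transpose_mat A = A"
    and L: "L \<in> carrier_mat K p" and p: "1 \<le> p" "p \<le> K"
    and H: "\<And>z. z \<in> carrier_vec p \<Longrightarrow> z \<noteq> 0\<^sub>v p \<Longrightarrow>
       L *\<^sub>v z \<noteq> 0\<^sub>v K \<and> t * ((L *\<^sub>v z) \<bullet> (L *\<^sub>v z)) \<le> (L *\<^sub>v z) \<bullet> (A *\<^sub>v (L *\<^sub>v z))"
  shows "t \<le> lambda p A"
proof (rule ccontr)
  assume "\<not> t \<le> lambda p A"
  obtain Q ds where Q: "Q \<in> carrier_mat K K" "transpose_mat Q * Q = 1\<^sub>m K"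
    and ds: "length ds = K" "sorted (rev ds)" and AQ: "A = Q * mat_diag K ((!) ds) * transpose_mat Q"
    and lam: "lambda p A = ds ! (p - 1)"
    using lambda_spectral_decomposition[OF A sym] p by metis
  define cs where "cs = map (\<lambda>j. transpose_mat L *\<^sub>v col Q j) [0..<p-1]"
  have "set cs \<subseteq> carrier_vec p" "length cs < p"
    unfolding cs_def using L Q p by (auto intro!: mult_mat_vec_carrier[of _ p K])
  then obtain z where z: "z \<in> carrier_vec p" "z \<noteq> 0\<^sub>v p" and zc: "\<And>c. c \<in> set cs \<Longrightarrow> c \<bullet> z = 0"
    using exists_nonzero_orthogonal by blast
  define x where "x = L *\<^sub>v z"
  define a where "a = transpose_mat Q *\<^sub>v x"
  have x: "x \<in> carrier_vec K" "x \<noteq> 0\<^sub>v K" and Hx: "t * (x \<bullet> x) \<le> x \<bullet> (A *\<^sub>v x)"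
    unfolding x_def using L z H[OF z] by auto
  have a0: "a $ j = 0" if "j < p - 1" for j
  proof -
    have "a $ j = (transpose_mat L *\<^sub>v col Q j) \<bullet> z"
      unfolding a_def x_def using transpose_vec_mult_scalar[OF L z(1), of "col Q j"] Q L z that p by auto
    thus ?thesis using zc that unfolding cs_def by auto
  qed
  have "x \<bullet> (A *\<^sub>v x) = (\<Sum>i<K. ds ! i * (a $ i)\<^sup>2)"
    unfolding AQ a_def by (rule orthogonal_diag_quadratic_form(2)[OF Q x(1)])
  also have "\<dots> \<le> ds ! (p - 1) * (\<Sum>i<K. (a $ i)\<^sup>2)"
    by (rule sorted_weighted_sum_le[OF ds(2,1)], use p a0 in auto)
  also have "(\<Sum>i<K. (a $ i)\<^sup>2) = x \<bullet> x"
    using orthogonal_diag_quadratic_form(1)[OF Q x(1), folded a_def] scalar_prod_self_eq_sum[of a] Q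
    by (simp add: a_def)
  also have "ds ! (p - 1) * (x \<bullet> x) < t * (x \<bullet> x)"
    using lam \<open>\<not> t \<le> lambda p A\<close> scalar_prod_self_gt_0[OF x] by (intro mult_strict_right_mono) auto
  finally show False using Hx by simp
qed

lemma exists_nonzero_orthogonal_prefix:
  fixes ws :: "real vec list"
  assumes ws: "set ws \<subseteq> carrier_vec K" and len: "length ws < p" and p: "p \<le> K"
  obtains b :: "real vec" where "b \<in> carrier_vec K" "b \<noteq> 0\<^sub>v K" "\<And>i. p \<le> i \<Longrightarrow> i < K \<Longrightarrow> b $ i = 0"
    "\<And>w. w \<in> set ws \<Longrightarrow> w \<bullet> b = 0"
proof -
  define cs where "cs = map (\<lambda>w. vec p (\<lambda>i. w $ i)) ws"
  have "set cs \<subseteq> carrier_vec p" "length cs < p" unfolding cs_def using len by auto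
  then obtain a where a: "a \<in> carrier_vec p" "a \<noteq> 0\<^sub>v p" and ac: "\<And>c. c \<in> set cs \<Longrightarrow> c \<bullet> a = 0"
    using exists_nonzero_orthogonal by blast
  define b where "b = vec K (\<lambda>i. if i < p then a $ i else 0)"
  have b: "b \<in> carrier_vec K" unfolding b_def by simp
  have "b \<noteq> 0\<^sub>v K"
  proof
    assume b0: "b = 0\<^sub>v K"
    have "a $ i = 0" if "i < p" for i
    proof -
      have "a $ i = b $ i" using that p by (simp add: b_def)
      thus ?thesis using b0 that p by simp
    qed
    thus False using a by (metis carrier_vecD eq_vecI index_zero_vec)
  qed
  moreover have "w \<bullet> b = 0" if w: "w \<in> set ws" for w
  proof -
    have "w \<bullet> b = (\<Sum>i\<in>{0..<K}. w $ i * (if i < p then a $ i else 0))"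
      unfolding b_def scalar_prod_def by simp
    also have "\<dots> = (\<Sum>i\<in>{0..<p}. w $ i * a $ i)"
      by (rule sum.mono_neutral_cong_right) (use p in auto)
    also have "\<dots> = vec p (\<lambda>i. w $ i) \<bullet> a"
      unfolding scalar_prod_def using carrier_vecD[OF a(1)] by (intro sum.cong) auto
    finally show ?thesis using ac w unfolding cs_def by auto
  qed
  ultimately show thesis using that[OF b] by (auto simp: b_def)
qed

lemma lambda_upper_bound:
  fixes A :: "real mat"
  assumes A: "A \<in> carrier_mat K K" and sym: "transpose_mat A = A"
    and vs: "set vs \<subseteq> carrier_vec K" and lvs: "length vs < p" and p: "1 \<le> p" "p \<le> K"
    and H: "\<And>x. x \<in> carrier_vec K \<Longrightarrow> (\<forall>v\<in>set vs. v \<bullet> x = 0) \<Longrightarrow> x \<bullet> (A *\<^sub>v x) \<le> t * (x \<bullet> x)"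
  shows "lambda p A \<le> t"
proof (rule ccontr)
  assume "\<not> lambda p A \<le> t"
  obtain Q ds where Q: "Q \<in> carrier_mat K K" "transpose_mat Q * Q = 1\<^sub>m K"
    and ds: "length ds = K" "sorted (rev ds)" and AQ: "A = Q * mat_diag K ((!) ds) * transpose_mat Q"
    and lam: "lambda p A = ds ! (p - 1)"
    using lambda_spectral_decomposition[OF A sym] p by metis
  have "set (map (\<lambda>v. transpose_mat Q *\<^sub>v v) vs) \<subseteq> carrier_vec K" using Q vs by auto
  then obtain b :: "real vec" where b: "b \<in> carrier_vec K" "b \<noteq> 0\<^sub>v K"
    and b_prefix: "\<And>i. p \<le> i \<Longrightarrow> i < K \<Longrightarrow> b $ i = 0"
    and b_orth: "\<And>v. v \<in> set vs \<Longrightarrow> (transpose_mat Q *\<^sub>v v) \<bullet> b = 0"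
    by (rule exists_nonzero_orthogonal_prefix) (use lvs p in auto)
  define x where "x = Q *\<^sub>v b"
  have x: "x \<in> carrier_vec K" unfolding x_def using Q b by auto
  have Qx: "transpose_mat Q *\<^sub>v x = b"
    unfolding x_def by (rule orthogonal_mat_mult_vec_cancel[OF Q b(1)])
  have xx: "x \<bullet> x = (\<Sum>i<K. (b $ i)\<^sup>2)"
    using orthogonal_diag_quadratic_form(1)[OF Q x, unfolded Qx] scalar_prod_self_eq_sum[of b] b by simp
  have "v \<bullet> x = 0" if "v \<in> set vs" for v
  proof -
    have "v \<in> carrier_vec K" using vs that by auto
    thus ?thesis unfolding x_def using transpose_vec_mult_scalar[OF Q(1) b(1)] b_orth[OF that] by simp
  qed
  hence "x \<bullet> (A *\<^sub>v x) \<le> t * (x \<bullet> x)" by (rule H[OF x, rule_format])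
  moreover have "ds ! (p - 1) * (x \<bullet> x) \<le> x \<bullet> (A *\<^sub>v x)"
    unfolding xx AQ orthogonal_diag_quadratic_form(2)[OF Q x] Qx
    by (rule sorted_weighted_sum_ge[OF ds(2,1)]) (use p b_prefix in auto)
  moreover have "t * (x \<bullet> x) < ds ! (p - 1) * (x \<bullet> x)"
    using lam \<open>\<not> lambda p A \<le> t\<close> scalar_prod_self_gt_0[OF b] xx scalar_prod_self_eq_sum[of b] b(1)
    by (intro mult_strict_right_mono) auto
  ultimately show False by linarith
qed

lemma lambda_nonneg:
  fixes A :: "real mat"
  assumes A: "A \<in> carrier_mat K K" and sym: "transpose_mat A = A"
    and psd: "\<And>x. x \<in> carrier_vec K \<Longrightarrow> 0 \<le> x \<bullet> (A *\<^sub>v x)"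
  shows "0 \<le> lambda p A"
proof (cases "1 \<le> p \<and> p \<le> K")
  case True
  obtain Q ds where Q: "Q \<in> carrier_mat K K" "transpose_mat Q * Q = 1\<^sub>m K"
    and AQ: "A = Q * mat_diag K ((!) ds) * transpose_mat Q" and lam: "lambda p A = ds ! (p - 1)"
    using lambda_spectral_decomposition[OF A sym] True by metis
  define x where "x = Q *\<^sub>v unit_vec K (p - 1)"
  have x: "x \<in> carrier_vec K" unfolding x_def using Q by simp
  have "x \<bullet> (A *\<^sub>v x) = (\<Sum>i<K. ds ! i * ((transpose_mat Q *\<^sub>v x) $ i)\<^sup>2)"
    unfolding AQ by (rule orthogonal_diag_quadratic_form(2)[OF Q x])
  also have "transpose_mat Q *\<^sub>v x = unit_vec K (p - 1)"
    unfolding x_def by (rule orthogonal_mat_mult_vec_cancel[OF Q]) simp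
  also have "(\<Sum>i<K. ds ! i * (unit_vec K (p - 1) $ i)\<^sup>2) = (\<Sum>i<K. if i = p - 1 then ds ! i else 0)"
    by (rule sum.cong) (auto simp: unit_vec_def)
  also have "\<dots> = ds ! (p - 1)" using True by auto
  finally show ?thesis using psd[OF x] lam by simp
qed (use A in \<open>auto simp: lambda_def\<close>)

section \<open>Monotonicity of the F-distribution tail\<close>

lemma Beta_real_pos: "0 < a \<Longrightarrow> 0 < b \<Longrightarrow> 0 < Beta a (b::real)"
  by (simp add: Beta_def Gamma_real_pos)

context
  fixes d1 d2 :: nat
  assumes d12: "0 < d1" "0 < d2"
begin

lemma F_density_nonneg: "0 \<le> F_density d1 d2 t"
  unfolding F_density_def using Beta_real_pos[of "real d1 / 2" "real d2 / 2"] d12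
  by (auto intro!: divide_nonneg_nonneg mult_nonneg_nonneg)

lemma QF_eq_QF_0: assumes "x \<le> 0" shows "QF d1 d2 x = QF d1 d2 0"
  unfolding QF_def set_lebesgue_integral_def
  using assms by (intro Bochner_Integration.integral_cong) (auto simp: indicator_def F_density_def)

lemma QF_nonneg: "0 \<le> QF d1 d2 x"
  unfolding QF_def set_lebesgue_integral_def
  by (rule integral_nonneg_AE, rule AE_I2, auto simp: indicator_def F_density_nonneg)

lemma continuous_on_F_density: assumes a: "0 < a" shows "continuous_on {a..b} (F_density d1 d2)"
proof -
  have base: "continuous_on {a..b} (\<lambda>t::real. t powr (real d1 / 2 - 1))"
    by (rule continuous_on_powr, insert a, auto intro: continuous_intros)
  have "1 + real d1 * t / real d2 \<noteq> 0" if "t \<in> {a..b}" for t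
  proof -
    have "0 \<le> real d1 * t / real d2" using that a by auto
    thus ?thesis by linarith
  qed
  hence tail: "continuous_on {a..b} (\<lambda>t::real. (1 + real d1 * t / real d2) powr (- (real d1 + real d2) / 2))"
    using d12 by (intro continuous_on_powr continuous_on_const continuous_intros) auto
  have "continuous_on {a..b} (\<lambda>t. (real d1 / real d2) powr (real d1 / 2) * t powr (real d1 / 2 - 1)
        * (1 + real d1 * t / real d2) powr (- (real d1 + real d2) / 2)
        / Beta (real d1 / 2) (real d2 / 2))"
    by (intro continuous_on_divide continuous_on_mult continuous_on_const base tail,
        insert Beta_real_pos[of "real d1 / 2" "real d2 / 2"] d12, auto)
  thus ?thesis by (rule continuous_on_cong[THEN iffD1, rotated -1], insert a, auto simp: F_density_def)
qed

lemma QF_antimono: assumes xy: "0 < x" "x \<le> y" shows "QF d1 d2 y \<le> QF d1 d2 x"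
proof (cases "set_integrable lborel {y<..} (F_density d1 d2)")
  case False
  hence "QF d1 d2 y = 0" unfolding QF_def set_lebesgue_integral_def set_integrable_def
    by (rule not_integrable_integral_eq)
  thus ?thesis using QF_nonneg by simp
next
  case True
  have "set_integrable lborel {x..y} (F_density d1 d2)" unfolding set_integrable_def
    by (rule borel_integrable_compact, auto intro: continuous_on_F_density xy)
  hence I: "set_integrable lborel {x<..y} (F_density d1 d2)"
    by (rule set_integrable_subset, auto)
  have split: "{x<..} = {x<..y} \<union> {y<..}" using xy by auto
  have "QF d1 d2 x = (LINT t:{x<..y}|lborel. F_density d1 d2 t) + QF d1 d2 y"
    unfolding QF_def split by (rule set_integral_Un[OF _ I True]) auto
  moreover have "0 \<le> (LINT t:{x<..y}|lborel. F_density d1 d2 t)"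
    unfolding set_lebesgue_integral_def
    by (rule integral_nonneg_AE, rule AE_I2, auto simp: indicator_def F_density_nonneg)
  ultimately show ?thesis by simp
qed

lemma QF_mult_antimono:
  assumes "0 < e1" "e1 \<le> e2"
  shows "QF d1 d2 (e2 * g) \<le> QF d1 d2 (e1 * g)"
proof (cases "g \<le> 0")
  case True
  hence "e2 * g \<le> 0" "e1 * g \<le> 0" using assms by (auto simp: mult_nonneg_nonpos)
  thus ?thesis using QF_eq_QF_0[of "e1 * g"] QF_eq_QF_0[of "e2 * g"] by simp
qed (use assms in \<open>auto intro!: QF_antimono mult_right_mono\<close>)

end

lemma QF_ratio_antimono:
  assumes d: "0 < d1" "0 < d2" and sig: "0 < sx2" "0 < s02"
    and a: "0 \<le> a'" "a' \<le> a" and b: "0 \<le> b" "b \<le> b'"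
  shows "QF d1 d2 ((s02 + sx2 * a) / (s02 + sx2 * b) * g) \<le> QF d1 d2 ((s02 + sx2 * a') / (s02 + sx2 * b') * g)"
proof (rule QF_mult_antimono[OF d])
  show "0 < (s02 + sx2 * a') / (s02 + sx2 * b')" using sig a b by (simp add: add_pos_nonneg)
  show "(s02 + sx2 * a') / (s02 + sx2 * b') \<le> (s02 + sx2 * a) / (s02 + sx2 * b)"
    using sig a b by (intro frac_le) (auto intro: add_pos_nonneg mult_left_mono)
qed

section \<open>Measurement matrices with orthogonal rows\<close>

lemma scalar_prod_sq_le:
  fixes v w :: "real vec"
  assumes "v \<in> carrier_vec n" "w \<in> carrier_vec n"
  shows "(v \<bullet> w)\<^sup>2 \<le> (v \<bullet> v) * (w \<bullet> w)"
proof -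
  have "(v \<bullet> w)\<^sup>2 = (\<Sum>i\<in>{0..<n}. v $ i * w $ i)\<^sup>2" using assms by (simp add: scalar_prod_def)
  also have "\<dots> \<le> (\<Sum>i\<in>{0..<n}. (v $ i)\<^sup>2) * (\<Sum>i\<in>{0..<n}. (w $ i)\<^sup>2)"
    by (rule Cauchy_Schwarz_ineq_sum)
  also have "\<dots> = (v \<bullet> v) * (w \<bullet> w)" using assms by (simp add: scalar_prod_def power2_eq_square)
  finally show ?thesis .
qed

lemma le_of_sq_le_mult:
  fixes q r :: real
  assumes "q\<^sup>2 \<le> r * q" "0 \<le> r" shows "q \<le> r"
  using assms by (cases "q > 0") (auto simp: power2_eq_square)

lemma transpose_smult_mat: "transpose_mat (k \<cdot>\<^sub>m A) = k \<cdot>\<^sub>m transpose_mat A"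
  by (rule eq_matI) auto

lemma smult_smult_mat: "a \<cdot>\<^sub>m (b \<cdot>\<^sub>m A) = (a * b) \<cdot>\<^sub>m (A :: real mat)"
  by (rule eq_matI) auto

lemma smult_one_mat: "1 \<cdot>\<^sub>m A = (A :: real mat)"
  by (rule eq_matI) auto

lemma smult_mat_mult_vec:
  "A \<in> carrier_mat nr nc \<Longrightarrow> v \<in> carrier_vec nc \<Longrightarrow> (a \<cdot>\<^sub>m A) *\<^sub>v v = a \<cdot>\<^sub>v (A *\<^sub>v (v :: real vec))"
  by (intro eq_vecI) auto

lemma leading_unit_mat_mult_vec:
  assumes "z \<in> carrier_vec p" "j < m"
  shows "(mat m p (\<lambda>(i, j). if i = j then 1 else 0) *\<^sub>v z) $ j = (if j < p then z $ j else (0 :: real))"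
proof -
  have "(mat m p (\<lambda>(i, j). if i = j then 1 else 0) *\<^sub>v z) $ j = (\<Sum>i\<in>{0..<p}. (if j = i then 1 else 0) * z $ i)"
    using assms by (simp add: scalar_prod_def)
  also have "\<dots> = (\<Sum>i\<in>{0..<p}. if j = i then z $ i else 0)" by (rule sum.cong) auto
  finally show ?thesis by simp
qed

lemma four_block_mat_eq_iff:
  assumes "A \<in> carrier_mat nr1 nc1" "B \<in> carrier_mat nr1 nc2" "C \<in> carrier_mat nr2 nc1" "D \<in> carrier_mat nr2 nc2"
    and "A' \<in> carrier_mat nr1 nc1" "B' \<in> carrier_mat nr1 nc2" "C' \<in> carrier_mat nr2 nc1" "D' \<in> carrier_mat nr2 nc2"
  shows "four_block_mat A B C D = four_block_mat A' B' C' D' \<longleftrightarrow> A = A' \<and> B = B' \<and> C = C' \<and> D = D'"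
proof
  assume eq: "four_block_mat A B C D = four_block_mat A' B' C' D'"
  have entry: "four_block_mat A B C D $$ (i, j) = four_block_mat A' B' C' D' $$ (i, j)" for i j
    by (simp add: eq)
  show "A = A' \<and> B = B' \<and> C = C' \<and> D = D'"
  proof (intro conjI eq_matI)
    fix i j
    show "i < dim_row A' \<Longrightarrow> j < dim_col A' \<Longrightarrow> A $$ (i, j) = A' $$ (i, j)"
      using entry[of i j] assms by auto
    show "i < dim_row B' \<Longrightarrow> j < dim_col B' \<Longrightarrow> B $$ (i, j) = B' $$ (i, j)"
      using entry[of i "j + nc1"] assms by auto
    show "i < dim_row C' \<Longrightarrow> j < dim_col C' \<Longrightarrow> C $$ (i, j) = C' $$ (i, j)"
      using entry[of "i + nr1" j] assms by auto
    show "i < dim_row D' \<Longrightarrow> j < dim_col D' \<Longrightarrow> D $$ (i, j) = D' $$ (i, j)"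
      using entry[of "i + nr1" "j + nc1"] assms by auto
  qed (use assms in auto)
qed simp

lemma append_rows_mult_transpose:
  assumes A: "A \<in> carrier_mat m1 n" and B: "B \<in> carrier_mat m2 n"
  shows "(A @\<^sub>r B) * transpose_mat (A @\<^sub>r B)
    = four_block_mat (A * transpose_mat A) (A * transpose_mat B) (B * transpose_mat A) (B * transpose_mat B)"
proof -
  have AB: "A @\<^sub>r B = four_block_mat A (0\<^sub>m m1 0) B (0\<^sub>m m2 0)"
    unfolding append_rows_def using A B by simp
  have ABt: "transpose_mat (A @\<^sub>r B) = four_block_mat (transpose_mat A) (transpose_mat B) (0\<^sub>m 0 m1) (0\<^sub>m 0 m2)"
    unfolding AB using A B by (subst transpose_four_block_mat) auto
  show ?thesis unfolding ABt unfolding AB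
    by (subst mult_four_block_mat[of A m1 n _ 0 B m2 _ _ m1 _ m2]) (use A B in auto)
qed

lemma admissible_iff:
  "admissible N M1 M2 Ps Po \<longleftrightarrow> Ps \<in> carrier_mat M1 N \<and> Po \<in> carrier_mat M2 N \<and>
     Ps * transpose_mat Ps = (1 / real (M1 + M2)) \<cdot>\<^sub>m 1\<^sub>m M1 \<and>
     Po * transpose_mat Po = (1 / real (M1 + M2)) \<cdot>\<^sub>m 1\<^sub>m M2 \<and> Ps * transpose_mat Po = 0\<^sub>m M1 M2"
proof (cases "Ps \<in> carrier_mat M1 N \<and> Po \<in> carrier_mat M2 N")
  case True
  hence Ps: "Ps \<in> carrier_mat M1 N" and Po: "Po \<in> carrier_mat M2 N" by auto
  let ?c = "1 / real (M1 + M2)"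
  have blocks: "?c \<cdot>\<^sub>m 1\<^sub>m (M1 + M2) = four_block_mat (?c \<cdot>\<^sub>m 1\<^sub>m M1) (0\<^sub>m M1 M2) (0\<^sub>m M2 M1) (?c \<cdot>\<^sub>m 1\<^sub>m M2)"
    by (rule eq_matI) auto
  have "Po * transpose_mat Ps = transpose_mat (Ps * transpose_mat Po)"
    using Ps Po by (subst transpose_mult[of _ M1 N]) auto
  thus ?thesis
    unfolding admissible_def append_rows_mult_transpose[OF Ps Po] blocks using Ps Po
    by (subst four_block_mat_eq_iff[of _ M1 M1 _ M2 _ M2]) auto
qed (auto simp: admissible_def)

context
  fixes c :: real and m N :: nat and P :: "real mat"
  assumes P: "P \<in> carrier_mat m N" and PP: "P * transpose_mat P = c \<cdot>\<^sub>m 1\<^sub>m m"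
begin

lemma scalar_prod_transpose_self:
  assumes z: "z \<in> carrier_vec m"
  shows "(transpose_mat P *\<^sub>v z) \<bullet> (transpose_mat P *\<^sub>v z) = c * (z \<bullet> z)"
proof -
  have "(transpose_mat P *\<^sub>v z) \<bullet> (transpose_mat P *\<^sub>v z) = z \<bullet> (P *\<^sub>v (transpose_mat P *\<^sub>v z))"
    using transpose_vec_mult_scalar[OF P, of "transpose_mat P *\<^sub>v z" z] P z by auto
  also have "P *\<^sub>v (transpose_mat P *\<^sub>v z) = c \<cdot>\<^sub>v z"
    using P PP z by (simp add: assoc_mult_mat_vec[symmetric, of _ m N _ m] smult_mat_mult_vec[of _ m m])
  finally show ?thesis using z by simp
qed

lemma scalar_prod_mult_self_le:
  assumes c: "0 \<le> c" and y: "y \<in> carrier_vec N"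
  shows "(P *\<^sub>v y) \<bullet> (P *\<^sub>v y) \<le> c * (y \<bullet> y)"
proof -
  let ?q = "(P *\<^sub>v y) \<bullet> (P *\<^sub>v y)" and ?w = "transpose_mat P *\<^sub>v (P *\<^sub>v y)"
  have Py: "P *\<^sub>v y \<in> carrier_vec m" using P y by auto
  have "?q\<^sup>2 = (?w \<bullet> y)\<^sup>2" using transpose_vec_mult_scalar[OF P y Py] by simp
  also have "\<dots> \<le> (?w \<bullet> ?w) * (y \<bullet> y)" using P Py y by (intro scalar_prod_sq_le) auto
  also have "\<dots> = (c * (y \<bullet> y)) * ?q" unfolding scalar_prod_transpose_self[OF Py] by simp
  finally show ?thesis by (rule le_of_sq_le_mult, insert c scalar_prod_self_ge_0[of y], auto)
qed

end

section \<open>Compressions of \<open>H H\<^sup>T\<close>\<close>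

abbreviation compressed_gram :: "real mat \<Rightarrow> real mat \<Rightarrow> real mat" where
  "compressed_gram H P \<equiv> transpose_mat H * transpose_mat P * P * H"

text \<open>The eigenvectors \<open>u\<close> and eigenvalues \<open>rho2\<close> are indexed from 1, rows and columns of
  matrices from 0.\<close>

locale gram_eigenbasis =
  fixes N K :: nat and H :: "real mat" and u :: "nat \<Rightarrow> real vec" and rho2 :: "nat \<Rightarrow> real"
  assumes H: "H \<in> carrier_mat N K"
    and u_dim: "\<And>i. 1 \<le> i \<Longrightarrow> i \<le> N \<Longrightarrow> u i \<in> carrier_vec N"
    and u_orth: "\<And>i j. 1 \<le> i \<Longrightarrow> i \<le> N \<Longrightarrow> 1 \<le> j \<Longrightarrow> j \<le> N \<Longrightarrow>
                   u i \<bullet> u j = (if i = j then 1 else 0)"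
    and u_eig: "\<And>i. 1 \<le> i \<Longrightarrow> i \<le> N \<Longrightarrow> (H * transpose_mat H) *\<^sub>v u i = rho2 i \<cdot>\<^sub>v u i"
    and rho_sorted: "\<And>i j. 1 \<le> i \<Longrightarrow> i \<le> j \<Longrightarrow> j \<le> N \<Longrightarrow> rho2 j \<le> rho2 i"
    and rho_nonneg: "0 \<le> rho2 N"
begin

lemma rho2_nonneg: "1 \<le> i \<Longrightarrow> i \<le> N \<Longrightarrow> 0 \<le> rho2 i"
  using rho_sorted[of i N] rho_nonneg by auto

context
  fixes a m :: nat
  assumes a: "1 \<le> a" "a + m \<le> N + 1"
begin

lemma rows_of_carrier: "rows_of m N a u \<in> carrier_mat m N"
  unfolding rows_of_def by simp

lemma row_rows_of: "i < m \<Longrightarrow> row (rows_of m N a u) i = u (a + i)"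
  unfolding rows_of_def using u_dim[of "a + i"] a by (intro eq_vecI) auto

lemma rows_of_mult_transpose: "rows_of m N a u * transpose_mat (rows_of m N a u) = 1\<^sub>m m"
  using rows_of_carrier row_rows_of a by (intro eq_matI) (auto simp: u_orth)

lemma rows_of_mult_vec: "y \<in> carrier_vec N \<Longrightarrow> rows_of m N a u *\<^sub>v y = vec m (\<lambda>j. u (a + j) \<bullet> y)"
  using rows_of_carrier row_rows_of by (intro eq_vecI) auto

lemma rows_of_mult_eigvec:
  "1 \<le> i \<Longrightarrow> i \<le> N \<Longrightarrow> rows_of m N a u *\<^sub>v u i = vec m (\<lambda>j. if a + j = i then 1 else 0)"
  using a by (subst rows_of_mult_vec) (auto simp: u_dim u_orth)

end

abbreviation "U \<equiv> rows_of N N 1 u"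

lemma U_carrier: "U \<in> carrier_mat N N"
  by (rule rows_of_carrier) simp_all

lemma U_orthogonal: "transpose_mat (transpose_mat U) * transpose_mat U = 1\<^sub>m N"
  using rows_of_mult_transpose[of 1 N] by simp

lemma gram_decomposition: "H * transpose_mat H = transpose_mat U * mat_diag N (\<lambda>i. rho2 (i + 1)) * U"
proof -
  let ?G = "H * transpose_mat H" and ?D = "mat_diag N (\<lambda>i. rho2 (i + 1))"
  have G: "?G \<in> carrier_mat N N" using H by auto
  have GU: "?G * transpose_mat U = transpose_mat U * ?D"
  proof (rule eq_matI)
    fix i j assume "i < dim_row (transpose_mat U * ?D)" "j < dim_col (transpose_mat U * ?D)"
    hence ij: "i < N" "j < N" using U_carrier by (auto simp: mat_diag_def)
    have "(?G * transpose_mat U) $$ (i, j) = (?G *\<^sub>v u (1 + j)) $ i"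
      using G U_carrier row_rows_of[of 1 N j] ij by (subst index_mult_mat) (auto simp: col_transpose)
    also have "\<dots> = rho2 (j + 1) * u (1 + j) $ i"
      using u_eig[of "1 + j"] u_dim[of "1 + j"] ij by simp
    also have "\<dots> = (transpose_mat U * ?D) $$ (i, j)"
      using ij U_carrier by (simp add: mat_diag_mult_right[of _ N] rows_of_def)
    finally show "(?G * transpose_mat U) $$ (i, j) = (transpose_mat U * ?D) $$ (i, j)" .
  qed (use U_carrier G in \<open>auto simp: mat_diag_def\<close>)
  have "transpose_mat U * U = 1\<^sub>m N"
    using orthogonal_mat_transpose_right[OF _ U_orthogonal] U_carrier by simp
  hence "?G * transpose_mat U * U = ?G"
    using G U_carrier by (simp add: assoc_mult_mat[of _ N N _ N _ N] right_mult_one_mat[OF G])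
  thus ?thesis unfolding GU by simp
qed

lemma eigenbasis_quadratic_forms:
  assumes y: "y \<in> carrier_vec N"
  shows "y \<bullet> y = (\<Sum>i<N. (u (i + 1) \<bullet> y)\<^sup>2)"
    "y \<bullet> ((H * transpose_mat H) *\<^sub>v y) = (\<Sum>i<N. rho2 (i + 1) * (u (i + 1) \<bullet> y)\<^sup>2)"
proof -
  have Uy: "(U *\<^sub>v y) $ i = u (i + 1) \<bullet> y" if "i < N" for i
    using rows_of_mult_vec[of 1 N y] y that by (simp add: add.commute)
  note qf = orthogonal_diag_quadratic_form[OF _ U_orthogonal y, unfolded transpose_transpose]
  show "y \<bullet> y = (\<Sum>i<N. (u (i + 1) \<bullet> y)\<^sup>2)"
    using qf(1) U_carrier Uy by (simp add: scalar_prod_self_eq_sum)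
  show "y \<bullet> ((H * transpose_mat H) *\<^sub>v y) = (\<Sum>i<N. rho2 (i + 1) * (u (i + 1) \<bullet> y)\<^sup>2)"
    unfolding gram_decomposition using qf(2) U_carrier Uy by simp
qed

lemma gram_quadratic_form_le:
  assumes y: "y \<in> carrier_vec N" and k: "1 \<le> k" "k \<le> N"
    and orth: "\<And>i. 1 \<le> i \<Longrightarrow> i < k \<Longrightarrow> u i \<bullet> y = 0"
  shows "y \<bullet> ((H * transpose_mat H) *\<^sub>v y) \<le> rho2 k * (y \<bullet> y)"
  unfolding eigenbasis_quadratic_forms[OF y] sum_distrib_left
proof (rule sum_mono)
  fix i assume "i \<in> {..<N}"
  thus "rho2 (i + 1) * (u (i + 1) \<bullet> y)\<^sup>2 \<le> rho2 k * (u (i + 1) \<bullet> y)\<^sup>2"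
    using orth[of "i + 1"] rho_sorted[of k "i + 1"] k by (cases "i + 1 < k") (auto intro: mult_right_mono)
qed

lemma gram_quadratic_form_ge:
  assumes y: "y \<in> carrier_vec N" and k: "1 \<le> k" "k \<le> N"
    and orth: "\<And>i. k < i \<Longrightarrow> i \<le> N \<Longrightarrow> u i \<bullet> y = 0"
  shows "rho2 k * (y \<bullet> y) \<le> y \<bullet> ((H * transpose_mat H) *\<^sub>v y)"
  unfolding eigenbasis_quadratic_forms[OF y] sum_distrib_left
proof (rule sum_mono)
  fix i assume "i \<in> {..<N}"
  thus "rho2 k * (u (i + 1) \<bullet> y)\<^sup>2 \<le> rho2 (i + 1) * (u (i + 1) \<bullet> y)\<^sup>2"
    using orth[of "i + 1"] rho_sorted[of "i + 1" k] k by (cases "k < i + 1") (auto intro: mult_right_mono)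
qed

lemma scalar_prod_transpose_H_self:
  assumes y: "y \<in> carrier_vec N"
  shows "(transpose_mat H *\<^sub>v y) \<bullet> (transpose_mat H *\<^sub>v y) = y \<bullet> ((H * transpose_mat H) *\<^sub>v y)"
proof -
  have "(transpose_mat H *\<^sub>v y) \<bullet> (transpose_mat H *\<^sub>v y) = y \<bullet> (H *\<^sub>v (transpose_mat H *\<^sub>v y))"
    using transpose_vec_mult_scalar[OF H, of "transpose_mat H *\<^sub>v y" y] H y by auto
  thus ?thesis using H y by (simp add: assoc_mult_mat_vec[of _ N K _ N])
qed

lemma scalar_prod_mult_H_sq_le:
  assumes w: "w \<in> carrier_vec N" and x: "x \<in> carrier_vec K" and k: "1 \<le> k" "k \<le> N"
    and orth: "\<And>i. 1 \<le> i \<Longrightarrow> i < k \<Longrightarrow> u i \<bullet> w = 0"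
  shows "(w \<bullet> (H *\<^sub>v x))\<^sup>2 \<le> rho2 k * (w \<bullet> w) * (x \<bullet> x)"
proof -
  have Hw: "transpose_mat H *\<^sub>v w \<in> carrier_vec K" using H w by auto
  have "(w \<bullet> (H *\<^sub>v x))\<^sup>2 = ((transpose_mat H *\<^sub>v w) \<bullet> x)\<^sup>2"
    using transpose_vec_mult_scalar[OF H x w] by simp
  also have "\<dots> \<le> ((transpose_mat H *\<^sub>v w) \<bullet> (transpose_mat H *\<^sub>v w)) * (x \<bullet> x)"
    by (rule scalar_prod_sq_le[OF Hw x])
  also have "\<dots> \<le> rho2 k * (w \<bullet> w) * (x \<bullet> x)"
    unfolding scalar_prod_transpose_H_self[OF w]
    by (rule mult_right_mono[OF gram_quadratic_form_le[OF w k orth] scalar_prod_self_ge_0])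
  finally show ?thesis .
qed

lemma scalar_prod_mult_H_self_le:
  assumes x: "x \<in> carrier_vec K" and k: "1 \<le> k" "k \<le> N"
    and orth: "\<And>i. 1 \<le> i \<Longrightarrow> i < k \<Longrightarrow> (transpose_mat H *\<^sub>v u i) \<bullet> x = 0"
  shows "(H *\<^sub>v x) \<bullet> (H *\<^sub>v x) \<le> rho2 k * (x \<bullet> x)"
proof (rule le_of_sq_le_mult)
  have "u i \<bullet> (H *\<^sub>v x) = 0" if "1 \<le> i" "i < k" for i
    using orth[OF that] transpose_vec_mult_scalar[OF H x, of "u i"] u_dim[of i] that k by auto
  hence "((H *\<^sub>v x) \<bullet> (H *\<^sub>v x))\<^sup>2 \<le> rho2 k * ((H *\<^sub>v x) \<bullet> (H *\<^sub>v x)) * (x \<bullet> x)"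
    using H x k by (intro scalar_prod_mult_H_sq_le) auto
  thus "((H *\<^sub>v x) \<bullet> (H *\<^sub>v x))\<^sup>2 \<le> rho2 k * (x \<bullet> x) * ((H *\<^sub>v x) \<bullet> (H *\<^sub>v x))"
    by (simp add: mult_ac)
  show "0 \<le> rho2 k * (x \<bullet> x)" using rho2_nonneg[OF k] scalar_prod_self_ge_0 by simp
qed

context
  fixes c :: real and m :: nat and P :: "real mat"
  assumes P: "P \<in> carrier_mat m N" and PP: "P * transpose_mat P = c \<cdot>\<^sub>m 1\<^sub>m m" and c: "0 < c"
begin

lemma compressed_gram_eq: "compressed_gram H P = transpose_mat (P * H) * (P * H)"
  unfolding transpose_mult[OF P H] by (rule assoc_mult_mat[of _ K m _ N _ K]) (use P H in auto)

lemma compressed_gram_carrier: "compressed_gram H P \<in> carrier_mat K K"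
  using P H by auto

lemma compressed_gram_symmetric: "transpose_mat (compressed_gram H P) = compressed_gram H P"
  unfolding compressed_gram_eq using P H by (subst transpose_mult[of _ K m _ K]) auto

lemma compressed_gram_quadratic_form:
  assumes x: "x \<in> carrier_vec K"
  shows "x \<bullet> (compressed_gram H P *\<^sub>v x) = (P *\<^sub>v (H *\<^sub>v x)) \<bullet> (P *\<^sub>v (H *\<^sub>v x))"
proof -
  have PH: "P * H \<in> carrier_mat m K" using P H by auto
  have "x \<bullet> (compressed_gram H P *\<^sub>v x) = ((P * H) *\<^sub>v x) \<bullet> ((P * H) *\<^sub>v x)"
    unfolding compressed_gram_eq using transpose_vec_mult_scalar[OF PH x, of "(P * H) *\<^sub>v x"] PH x
    by (auto simp: assoc_mult_mat_vec[of _ K m _ K] comm_scalar_prod[of _ K])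
  thus ?thesis using P H x by (simp add: assoc_mult_mat_vec[of _ m N _ K])
qed

lemma lambda_compressed_gram_nonneg: "0 \<le> lambda p (compressed_gram H P)"
  by (rule lambda_nonneg[OF compressed_gram_carrier compressed_gram_symmetric])
    (simp add: compressed_gram_quadratic_form scalar_prod_self_ge_0)

lemma lambda_compressed_gram_le:
  assumes k: "1 \<le> k" "k \<le> K" "k \<le> N"
  shows "lambda k (compressed_gram H P) \<le> c * rho2 k"
proof (rule lambda_upper_bound[OF compressed_gram_carrier compressed_gram_symmetric,
      of "map (\<lambda>i. transpose_mat H *\<^sub>v u i) [1..<k]"])
  fix x assume x: "x \<in> carrier_vec K"
    and orth: "\<forall>v\<in>set (map (\<lambda>i. transpose_mat H *\<^sub>v u i) [1..<k]). v \<bullet> x = 0"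
  have "x \<bullet> (compressed_gram H P *\<^sub>v x) \<le> c * ((H *\<^sub>v x) \<bullet> (H *\<^sub>v x))"
    unfolding compressed_gram_quadratic_form[OF x]
    by (rule scalar_prod_mult_self_le[OF P PP]) (use c H x in auto)
  also have "\<dots> \<le> c * (rho2 k * (x \<bullet> x))"
    using orth c by (intro mult_left_mono scalar_prod_mult_H_self_le[OF x k(1,3)]) auto
  finally show "x \<bullet> (compressed_gram H P *\<^sub>v x) \<le> c * rho2 k * (x \<bullet> x)" by simp
qed (use H u_dim k in \<open>auto intro!: mult_mat_vec_carrier[of _ K N]\<close>)

text \<open>With \<open>y = P\<^sup>T w\<close> and \<open>g = y \<bullet> H H\<^sup>T y = \<parallel>H\<^sup>T y\<parallel>\<^sup>2\<close>, Cauchy--Schwarz for \<open>w\<close> and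
  \<open>P H H\<^sup>T y\<close> gives \<open>g\<^sup>2 \<le> \<parallel>w\<parallel>\<^sup>2 \<parallel>P H H\<^sup>T y\<parallel>\<^sup>2\<close>, while \<open>\<parallel>y\<parallel>\<^sup>2 = c \<parallel>w\<parallel>\<^sup>2\<close>.\<close>

lemma compressed_gram_quadratic_form_ge:
  assumes w: "w \<in> carrier_vec m" "w \<noteq> 0\<^sub>v m" and r: "0 < r"
    and ry: "r * ((transpose_mat P *\<^sub>v w) \<bullet> (transpose_mat P *\<^sub>v w))
      \<le> (transpose_mat P *\<^sub>v w) \<bullet> ((H * transpose_mat H) *\<^sub>v (transpose_mat P *\<^sub>v w))"
  defines "x \<equiv> transpose_mat H *\<^sub>v (transpose_mat P *\<^sub>v w)"
  shows "x \<noteq> 0\<^sub>v K" "c * r * (x \<bullet> x) \<le> x \<bullet> (compressed_gram H P *\<^sub>v x)"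
proof -
  let ?G = "H * transpose_mat H"
  define y where "y = transpose_mat P *\<^sub>v w"
  define g where "g = y \<bullet> (?G *\<^sub>v y)"
  define v where "v = P *\<^sub>v (?G *\<^sub>v y)"
  have y: "y \<in> carrier_vec N" unfolding y_def using P w by auto
  have x: "x \<in> carrier_vec K" unfolding x_def y_def[symmetric] using H y by auto
  have Gy: "?G *\<^sub>v y \<in> carrier_vec N" using H y by auto
  have ww: "0 < w \<bullet> w" by (rule scalar_prod_self_gt_0[OF w])
  have yy: "y \<bullet> y = c * (w \<bullet> w)" unfolding y_def by (rule scalar_prod_transpose_self[OF P PP w(1)])
  have "0 < r * (y \<bullet> y)" unfolding yy using r c ww by simp
  hence g: "0 < g" using ry unfolding g_def y_def by linarith
  have xx: "x \<bullet> x = g" unfolding x_def y_def[symmetric] g_def by (rule scalar_prod_transpose_H_self[OF y])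
  thus "x \<noteq> 0\<^sub>v K" using g by auto
  have v: "v \<in> carrier_vec m" unfolding v_def using P Gy by auto
  have "w \<bullet> v = g" unfolding v_def g_def using transpose_vec_mult_scalar[OF P Gy w(1), folded y_def] by simp
  hence "g * g \<le> (w \<bullet> w) * (v \<bullet> v)" using scalar_prod_sq_le[OF w(1) v] by (simp add: power2_eq_square)
  moreover have "(w \<bullet> w) * (c * r * g) \<le> g * g"
    using ry g unfolding yy y_def[symmetric] g_def[symmetric] by (simp add: mult_ac mult_right_mono)
  ultimately have "c * r * g \<le> v \<bullet> v" using ww by (meson mult_le_cancel_left_pos order.trans)
  moreover have "x \<bullet> (compressed_gram H P *\<^sub>v x) = v \<bullet> v"
    unfolding compressed_gram_quadratic_form[OF x] unfolding v_def x_def y_def[symmetric] using H y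
    by (simp add: assoc_mult_mat_vec[of _ N K _ N])
  ultimately show "c * r * (x \<bullet> x) \<le> x \<bullet> (compressed_gram H P *\<^sub>v x)" unfolding xx by simp
qed

lemma lambda_compressed_gram_ge:
  assumes E: "E \<in> carrier_mat m p" and p: "1 \<le> p" "p \<le> K" and k: "1 \<le> k" "k \<le> N"
    and inj: "\<And>z. z \<in> carrier_vec p \<Longrightarrow> z \<noteq> 0\<^sub>v p \<Longrightarrow> E *\<^sub>v z \<noteq> 0\<^sub>v m"
    and orth: "\<And>i z. k < i \<Longrightarrow> i \<le> N \<Longrightarrow> z \<in> carrier_vec p \<Longrightarrow> u i \<bullet> (transpose_mat P *\<^sub>v (E *\<^sub>v z)) = 0"
  shows "c * rho2 k \<le> lambda p (compressed_gram H P)"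
proof (cases "rho2 k = 0")
  case False
  hence rho: "0 < rho2 k" using rho2_nonneg[OF k] by simp
  show ?thesis
  proof (rule lambda_lower_bound[OF compressed_gram_carrier compressed_gram_symmetric _ p])
    fix z :: "real vec" assume z: "z \<in> carrier_vec p" "z \<noteq> 0\<^sub>v p"
    have w: "E *\<^sub>v z \<in> carrier_vec m" "E *\<^sub>v z \<noteq> 0\<^sub>v m" using E z inj by auto
    have "rho2 k * ((transpose_mat P *\<^sub>v (E *\<^sub>v z)) \<bullet> (transpose_mat P *\<^sub>v (E *\<^sub>v z)))
      \<le> (transpose_mat P *\<^sub>v (E *\<^sub>v z)) \<bullet> ((H * transpose_mat H) *\<^sub>v (transpose_mat P *\<^sub>v (E *\<^sub>v z)))"
      using orth z P w by (intro gram_quadratic_form_ge[OF _ k]) auto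
    note bound = compressed_gram_quadratic_form_ge[OF w rho this]
    have "(transpose_mat H * (transpose_mat P * E)) *\<^sub>v z = transpose_mat H *\<^sub>v (transpose_mat P *\<^sub>v (E *\<^sub>v z))"
      using H P E z by (simp add: assoc_mult_mat_vec[of _ K N _ p] assoc_mult_mat_vec[of _ N m _ p])
    thus "(transpose_mat H * (transpose_mat P * E)) *\<^sub>v z \<noteq> 0\<^sub>v K \<and>
      c * rho2 k * (((transpose_mat H * (transpose_mat P * E)) *\<^sub>v z) \<bullet> ((transpose_mat H * (transpose_mat P * E)) *\<^sub>v z))
       \<le> ((transpose_mat H * (transpose_mat P * E)) *\<^sub>v z) \<bullet> (compressed_gram H P *\<^sub>v ((transpose_mat H * (transpose_mat P * E)) *\<^sub>v z))"
      using bound by simp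
  qed (use H P E in auto)
qed (simp add: lambda_compressed_gram_nonneg)

lemma lambda_last_compressed_gram_ge:
  assumes m: "1 \<le> m" "m \<le> K" "m \<le> N"
  shows "c * rho2 N \<le> lambda m (compressed_gram H P)"
  using m H by (intro lambda_compressed_gram_ge[of "1\<^sub>m m"]) auto

lemma lambda_first_compressed_gram_ge:
  assumes m: "1 \<le> m" "m \<le> N" and K: "1 \<le> K"
  shows "c * rho2 (N - m + 1) \<le> lambda 1 (compressed_gram H P)"
proof -
  let ?k = "N - m + 1"
  let ?cs = "map (\<lambda>i. P *\<^sub>v u i) [?k + 1..<N + 1]"
  have "set ?cs \<subseteq> carrier_vec m" using P m by (auto intro!: mult_mat_vec_carrier[of _ m N] u_dim)
  moreover have "length ?cs < m" using m by auto
  ultimately obtain z0 where z0: "z0 \<in> carrier_vec m" "z0 \<noteq> 0\<^sub>v m"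
    and orth_cs: "\<And>v. v \<in> set ?cs \<Longrightarrow> v \<bullet> z0 = 0"
    by (rule exists_nonzero_orthogonal) blast
  have orth: "(P *\<^sub>v u i) \<bullet> z0 = 0" if "?k < i" "i \<le> N" for i
  proof (rule orth_cs)
    have "i \<in> set [?k + 1..<N + 1]" using that by auto
    thus "P *\<^sub>v u i \<in> set ?cs" unfolding set_map by (rule imageI)
  qed
  have E: "mat_of_cols m [z0] *\<^sub>v z = (z $ 0) \<cdot>\<^sub>v z0" if "z \<in> carrier_vec 1" for z
    using that z0 by (intro eq_vecI) (auto simp: scalar_prod_def mat_of_cols_def)
  show ?thesis
  proof (rule lambda_compressed_gram_ge[of "mat_of_cols m [z0]"])
    fix z :: "real vec" assume "z \<in> carrier_vec 1" "z \<noteq> 0\<^sub>v 1"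
    hence z00: "z $ 0 \<noteq> 0" by (metis carrier_vecD eq_vecI index_zero_vec less_one)
    obtain j where j: "j < m" "z0 $ j \<noteq> 0" using z0 by (metis carrier_vecD eq_vecI index_zero_vec)
    hence "(mat_of_cols m [z0] *\<^sub>v z) $ j \<noteq> 0" unfolding E[OF \<open>z \<in> carrier_vec 1\<close>] using z00 z0(1) by simp
    thus "mat_of_cols m [z0] *\<^sub>v z \<noteq> 0\<^sub>v m" using j by (metis index_zero_vec(1))
  next
    fix i and z :: "real vec" assume i: "?k < i" "i \<le> N" and z: "z \<in> carrier_vec 1"
    have ui: "u i \<in> carrier_vec N" using u_dim i by auto
    have "u i \<bullet> (transpose_mat P *\<^sub>v z0) = (P *\<^sub>v u i) \<bullet> z0"
      using transpose_vec_mult_scalar[OF P ui z0(1)] comm_scalar_prod[OF ui, of "transpose_mat P *\<^sub>v z0"]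
        comm_scalar_prod[OF z0(1), of "P *\<^sub>v u i"] P ui z0 by auto
    thus "u i \<bullet> (transpose_mat P *\<^sub>v (mat_of_cols m [z0] *\<^sub>v z)) = 0"
      unfolding E[OF z] using orth[OF i] P z0 ui by (simp add: mult_mat_vec)
  qed (use m K in auto)
qed

end

subsection \<open>The eigenvector design\<close>

lemma rows_of_transpose_scalar_prod:
  assumes a: "1 \<le> a" "a + m \<le> N + 1" and i: "1 \<le> i" "i \<le> N" and z: "z \<in> carrier_vec m"
  shows "u i \<bullet> (transpose_mat (rows_of m N a u) *\<^sub>v z) = (if a \<le> i \<and> i < a + m then z $ (i - a) else 0)"
proof -
  have "u i \<bullet> (transpose_mat (rows_of m N a u) *\<^sub>v z) = (rows_of m N a u *\<^sub>v u i) \<bullet> z"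
    using transpose_vec_mult_scalar[OF rows_of_carrier[OF a] u_dim[OF i] z]
      comm_scalar_prod[OF u_dim[OF i], of "transpose_mat (rows_of m N a u) *\<^sub>v z"]
      comm_scalar_prod[OF z, of "rows_of m N a u *\<^sub>v u i"] rows_of_carrier[OF a] z u_dim[OF i]
    by auto
  also have "\<dots> = (\<Sum>j\<in>{0..<m}. if j = i - a \<and> a \<le> i then z $ j else 0)"
    unfolding rows_of_mult_eigvec[OF a i] scalar_prod_def using z by (intro sum.cong) auto
  also have "\<dots> = (if a \<le> i \<and> i < a + m then z $ (i - a) else 0)" by auto
  finally show ?thesis .
qed

text \<open>Here \<open>w = R\<^sup>T R H x\<close> is orthogonal to \<open>u i\<close> for \<open>i < a + p - 1\<close>, and
  \<open>w \<bullet> H x = \<parallel>w\<parallel>\<^sup>2 = \<parallel>R H x\<parallel>\<^sup>2\<close>.\<close>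

lemma scalar_prod_rows_of_mult_H_le:
  assumes a: "1 \<le> a" "a + m \<le> N + 1" and x: "x \<in> carrier_vec K" and p: "1 \<le> p" "p \<le> m"
    and orth: "\<And>i. a \<le> i \<Longrightarrow> i < a + p - 1 \<Longrightarrow> (transpose_mat H *\<^sub>v u i) \<bullet> x = 0"
  shows "(rows_of m N a u *\<^sub>v (H *\<^sub>v x)) \<bullet> (rows_of m N a u *\<^sub>v (H *\<^sub>v x)) \<le> rho2 (a + p - 1) * (x \<bullet> x)"
proof -
  let ?R = "rows_of m N a u" and ?k = "a + p - 1"
  define y where "y = H *\<^sub>v x"
  define z where "z = ?R *\<^sub>v y"
  define w where "w = transpose_mat ?R *\<^sub>v z"
  have R: "?R \<in> carrier_mat m N" by (rule rows_of_carrier[OF a])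
  have k: "1 \<le> ?k" "?k \<le> N" using a p by auto
  have y: "y \<in> carrier_vec N" and z: "z \<in> carrier_vec m" and w: "w \<in> carrier_vec N"
    unfolding y_def z_def w_def using H x R by auto
  have ww: "w \<bullet> w = z \<bullet> z"
    unfolding w_def using scalar_prod_transpose_self[OF R _ z, of 1] rows_of_mult_transpose[OF a]
    by (simp add: smult_one_mat)
  have wy: "w \<bullet> (H *\<^sub>v x) = z \<bullet> z"
    unfolding w_def y_def[symmetric] z_def using transpose_vec_mult_scalar[OF R y, of "?R *\<^sub>v y"] R y by simp
  have "u i \<bullet> w = 0" if i: "1 \<le> i" "i < ?k" for i
  proof -
    have ui: "u i \<bullet> w = (if a \<le> i \<and> i < a + m then z $ (i - a) else 0)"
      unfolding w_def by (rule rows_of_transpose_scalar_prod[OF a _ _ z]) (use i k in auto)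
    have "z $ (i - a) = (transpose_mat H *\<^sub>v u i) \<bullet> x" if "a \<le> i"
      unfolding z_def rows_of_mult_vec[OF a y] unfolding y_def
      using that i k p transpose_vec_mult_scalar[OF H x, of "u i"] u_dim[of i] by simp
    thus ?thesis unfolding ui using orth i by auto
  qed
  hence "(z \<bullet> z)\<^sup>2 \<le> rho2 ?k * (x \<bullet> x) * (z \<bullet> z)"
    using scalar_prod_mult_H_sq_le[OF w x k] unfolding wy ww by (simp add: mult_ac)
  hence "z \<bullet> z \<le> rho2 ?k * (x \<bullet> x)"
    by (rule le_of_sq_le_mult) (use rho2_nonneg[OF k] scalar_prod_self_ge_0[of x] in simp)
  thus ?thesis unfolding z_def y_def .
qed

context
  fixes a m :: nat and T :: "real mat" and Mt :: real
  assumes a: "1 \<le> a" "a + m \<le> N + 1" and T: "T \<in> carrier_mat m m" "T * transpose_mat T = 1\<^sub>m m"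
    and Mt: "0 < Mt"
begin

lemma design_carrier: "(1 / sqrt Mt) \<cdot>\<^sub>m (T * rows_of m N a u) \<in> carrier_mat m N"
  using T rows_of_carrier[OF a] by auto

lemma design_mult_transpose:
  "(1 / sqrt Mt) \<cdot>\<^sub>m (T * rows_of m N a u) * transpose_mat ((1 / sqrt Mt) \<cdot>\<^sub>m (T * rows_of m N a u))
    = (1 / Mt) \<cdot>\<^sub>m 1\<^sub>m m"
proof -
  let ?R = "rows_of m N a u"
  have R: "?R \<in> carrier_mat m N" by (rule rows_of_carrier[OF a])
  have "T * ?R * transpose_mat (T * ?R) = T * (?R * (transpose_mat ?R * transpose_mat T))"
    using T R by (simp add: transpose_mult[of _ m m _ N] assoc_mult_mat[of _ m m _ N _ m])
  also have "?R * (transpose_mat ?R * transpose_mat T) = (?R * transpose_mat ?R) * transpose_mat T"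
    using T R by (simp add: assoc_mult_mat[of _ m N _ m _ m])
  also have "T * (\<dots>) = 1\<^sub>m m" using T unfolding rows_of_mult_transpose[OF a] by simp
  finally have "T * ?R * transpose_mat (T * ?R) = 1\<^sub>m m" .
  moreover have "1 / sqrt Mt * (1 / sqrt Mt) = 1 / Mt" using Mt by (simp add: real_sqrt_mult[symmetric])
  ultimately show ?thesis
    using T R by (simp add: transpose_smult_mat mult_smult_assoc_mat[of _ m N _ m]
        mult_smult_distrib[of _ m N _ m] smult_smult_mat del: real_sqrt_mult_self)
qed

lemma T_orthogonal: "transpose_mat T * T = 1\<^sub>m m"
  using orthogonal_mat_transpose_right[of "transpose_mat T" m] T by auto

lemma design_mult_vec_self:
  assumes y: "y \<in> carrier_vec N"
  defines "P \<equiv> (1 / sqrt Mt) \<cdot>\<^sub>m (T * rows_of m N a u)"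
  shows "(P *\<^sub>v y) \<bullet> (P *\<^sub>v y) = (rows_of m N a u *\<^sub>v y) \<bullet> (rows_of m N a u *\<^sub>v y) / Mt"
proof -
  let ?z = "rows_of m N a u *\<^sub>v y"
  have z: "?z \<in> carrier_vec m" using rows_of_carrier[OF a] y by auto
  have "P *\<^sub>v y = (1 / sqrt Mt) \<cdot>\<^sub>v (T *\<^sub>v ?z)"
    unfolding P_def using T rows_of_carrier[OF a] y
    by (simp add: smult_mat_mult_vec[of _ m N] assoc_mult_mat_vec[of _ m m _ N])
  moreover have "(T *\<^sub>v ?z) \<bullet> (T *\<^sub>v ?z) = ?z \<bullet> ?z"
    using scalar_prod_transpose_self[of "transpose_mat T" m m 1, OF _ _ z] T T_orthogonal
    by (simp add: smult_one_mat)
  ultimately show ?thesis using T z Mt by (simp add: power2_eq_square[symmetric] power_divide)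
qed

lemma lambda_design_le:
  assumes p: "1 \<le> p" "p \<le> K" "p \<le> m"
  shows "lambda p (compressed_gram H ((1 / sqrt Mt) \<cdot>\<^sub>m (T * rows_of m N a u))) \<le> rho2 (a + p - 1) / Mt"
proof -
  let ?R = "rows_of m N a u" and ?k = "a + p - 1"
  have c: "0 < 1 / Mt" using Mt by simp
  have "lambda p (compressed_gram H ((1 / sqrt Mt) \<cdot>\<^sub>m (T * ?R))) \<le> rho2 ?k / Mt * 1"
  proof (rule lambda_upper_bound[OF compressed_gram_carrier compressed_gram_symmetric,
        OF design_carrier design_mult_transpose c design_carrier design_mult_transpose c,
        of "map (\<lambda>i. transpose_mat H *\<^sub>v u i) [a..<?k]"])
    fix x assume x: "x \<in> carrier_vec K" and orth: "\<forall>v\<in>set (map (\<lambda>i. transpose_mat H *\<^sub>v u i) [a..<?k]). v \<bullet> x = 0"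
    have "(?R *\<^sub>v (H *\<^sub>v x)) \<bullet> (?R *\<^sub>v (H *\<^sub>v x)) \<le> rho2 ?k * (x \<bullet> x)"
      by (rule scalar_prod_rows_of_mult_H_le[OF a x p(1,3)]) (use orth in auto)
    thus "x \<bullet> (compressed_gram H ((1 / sqrt Mt) \<cdot>\<^sub>m (T * ?R)) *\<^sub>v x) \<le> rho2 ?k / Mt * 1 * (x \<bullet> x)"
      unfolding compressed_gram_quadratic_form[OF design_carrier design_mult_transpose c x]
        design_mult_vec_self[OF mult_mat_vec_carrier[OF H x]]
      using Mt by (simp add: divide_right_mono)
  qed (use H u_dim a p in \<open>auto intro!: mult_mat_vec_carrier[of _ K N]\<close>)
  thus ?thesis by simp
qed

lemma lambda_design_ge:
  assumes p: "1 \<le> p" "p \<le> K" "p \<le> m"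
  shows "rho2 (a + p - 1) / Mt \<le> lambda p (compressed_gram H ((1 / sqrt Mt) \<cdot>\<^sub>m (T * rows_of m N a u)))"
proof -
  let ?R = "rows_of m N a u" and ?P = "(1 / sqrt Mt) \<cdot>\<^sub>m (T * rows_of m N a u)"
  define E :: "real mat" where "E = mat m p (\<lambda>(i, j). if i = j then 1 else 0)"
  have R: "?R \<in> carrier_mat m N" by (rule rows_of_carrier[OF a])
  have c: "0 < 1 / Mt" using Mt by simp
  have E: "E \<in> carrier_mat m p" unfolding E_def by simp
  note Ez = leading_unit_mat_mult_vec[of _ p _ m, folded E_def]
  have "1 / Mt * rho2 (a + p - 1) \<le> lambda p (compressed_gram H ?P)"
  proof (rule lambda_compressed_gram_ge[OF design_carrier design_mult_transpose c, of "T * E"])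
    fix z :: "real vec" assume z: "z \<in> carrier_vec p" "z \<noteq> 0\<^sub>v p"
    then obtain j where j: "j < p" "z $ j \<noteq> 0" by (metis carrier_vecD eq_vecI index_zero_vec)
    show "(T * E) *\<^sub>v z \<noteq> 0\<^sub>v m"
    proof
      assume "(T * E) *\<^sub>v z = 0\<^sub>v m"
      moreover have "transpose_mat T *\<^sub>v 0\<^sub>v m = 0\<^sub>v m" using T by (intro eq_vecI) auto
      ultimately have "E *\<^sub>v z = 0\<^sub>v m"
        using orthogonal_mat_mult_vec_cancel[OF T(1) T_orthogonal, of "E *\<^sub>v z"] T E z
        by (simp add: assoc_mult_mat_vec[of _ m m _ p])
      thus False using Ez[OF z(1), of j] j p by simp
    qed
  next
    fix i and z :: "real vec" assume i: "a + p - 1 < i" "i \<le> N" and z: "z \<in> carrier_vec p"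
    have v: "E *\<^sub>v z \<in> carrier_vec m" using E z by simp
    have "transpose_mat ?P *\<^sub>v ((T * E) *\<^sub>v z) = (1 / sqrt Mt) \<cdot>\<^sub>v (transpose_mat ?R *\<^sub>v (E *\<^sub>v z))"
      using T R E z orthogonal_mat_mult_vec_cancel[OF T(1) T_orthogonal v]
      by (simp add: transpose_smult_mat transpose_mult[OF T(1) R] smult_mat_mult_vec[of _ N m]
          assoc_mult_mat_vec[of _ m m _ p] assoc_mult_mat_vec[of _ N m _ m])
    moreover have "u i \<bullet> (transpose_mat ?R *\<^sub>v (E *\<^sub>v z)) = 0"
      using rows_of_transpose_scalar_prod[OF a _ i(2) v] Ez[OF z] i p by auto
    ultimately show "u i \<bullet> (transpose_mat ?P *\<^sub>v ((T * E) *\<^sub>v z)) = 0"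
      using u_dim[of i] R v i p by simp
  qed (use T E a p in auto)
  thus ?thesis by simp
qed

end

lemma rows_of_mult_transpose_disjoint:
  assumes "1 \<le> a" "a + m \<le> b" "b + n \<le> N + 1"
  shows "rows_of m N a u * transpose_mat (rows_of n N b u) = 0\<^sub>m m n"
proof (rule eq_matI)
  fix i j assume "i < dim_row (0\<^sub>m m n :: real mat)" "j < dim_col (0\<^sub>m m n :: real mat)"
  hence ij: "i < m" "j < n" by auto
  have "(rows_of m N a u * transpose_mat (rows_of n N b u)) $$ (i, j) = u (a + i) \<bullet> u (b + j)"
    using ij assms row_rows_of[of a m i] row_rows_of[of b n j] rows_of_carrier[of a m] rows_of_carrier[of b n]
    by simp
  thus "(rows_of m N a u * transpose_mat (rows_of n N b u)) $$ (i, j) = 0\<^sub>m m n $$ (i, j)"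
    using ij assms by (simp add: u_orth)
qed (auto simp: rows_of_def)

lemma admissible_design:
  assumes a: "1 \<le> a" "a + M1 \<le> b" "b + M2 \<le> N + 1" and M: "0 < M1 + M2"
    and Ts: "Ts \<in> carrier_mat M1 M1" "Ts * transpose_mat Ts = 1\<^sub>m M1"
    and To: "To \<in> carrier_mat M2 M2" "To * transpose_mat To = 1\<^sub>m M2"
  shows "admissible N M1 M2 ((1 / sqrt (real (M1 + M2))) \<cdot>\<^sub>m (Ts * rows_of M1 N a u))
    ((1 / sqrt (real (M1 + M2))) \<cdot>\<^sub>m (To * rows_of M2 N b u))"
proof -
  let ?s = "1 / sqrt (real (M1 + M2))" and ?Rs = "rows_of M1 N a u" and ?Ro = "rows_of M2 N b u"
  have Mt: "0 < real (M1 + M2)" using M by (simp only: of_nat_0_less_iff)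
  have a': "1 \<le> a" "a + M1 \<le> N + 1" and b': "1 \<le> b" "b + M2 \<le> N + 1" using a by auto
  have Rs: "?Rs \<in> carrier_mat M1 N" and Ro: "?Ro \<in> carrier_mat M2 N"
    using rows_of_carrier[OF a'] rows_of_carrier[OF b'] .
  have "Ts * ?Rs * transpose_mat (To * ?Ro) = Ts * ((?Rs * transpose_mat ?Ro) * transpose_mat To)"
    using Ts To Rs Ro by (simp add: transpose_mult[of _ M2 M2 _ N] assoc_mult_mat[of _ M1 _ _ _ _ M2])
  also have "\<dots> = 0\<^sub>m M1 M2"
    unfolding rows_of_mult_transpose_disjoint[OF a] using Ts To by simp
  finally have "(?s \<cdot>\<^sub>m (Ts * ?Rs)) * transpose_mat (?s \<cdot>\<^sub>m (To * ?Ro)) = 0\<^sub>m M1 M2"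
    using Ts To Rs Ro by (simp add: transpose_smult_mat mult_smult_assoc_mat[of _ M1 N _ M2]
        mult_smult_distrib[of _ M1 N _ M2])
  thus ?thesis unfolding admissible_iff
    using design_carrier[OF a' Ts Mt] design_carrier[OF b' To Mt]
      design_mult_transpose[OF a' Ts Mt] design_mult_transpose[OF b' To Mt] by simp
qed

lemma lambda_le_top_design:
  assumes P: "P \<in> carrier_mat m N" "P * transpose_mat P = (1 / Mt) \<cdot>\<^sub>m 1\<^sub>m m" and Mt: "0 < Mt"
    and T: "T \<in> carrier_mat m m" "T * transpose_mat T = 1\<^sub>m m" and m: "m \<le> N" and p: "1 \<le> p" "p \<le> m"
  shows "lambda p (compressed_gram H P) \<le> lambda p (compressed_gram H ((1 / sqrt Mt) \<cdot>\<^sub>m (T * rows_of m N 1 u)))"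
proof (cases "p \<le> K")
  case True
  have "lambda p (compressed_gram H P) \<le> 1 / Mt * rho2 p"
    by (rule lambda_compressed_gram_le[OF P]) (use Mt True m p in auto)
  also have "\<dots> \<le> lambda p (compressed_gram H ((1 / sqrt Mt) \<cdot>\<^sub>m (T * rows_of m N 1 u)))"
    using lambda_design_ge[of 1 m T Mt p] T Mt True m p by simp
  finally show ?thesis .
qed (use H in \<open>simp add: lambda_def\<close>)

lemma lambda_bottom_design_le:
  assumes P: "P \<in> carrier_mat m N" "P * transpose_mat P = (1 / Mt) \<cdot>\<^sub>m 1\<^sub>m m" and Mt: "0 < Mt"
    and T: "T \<in> carrier_mat m m" "T * transpose_mat T = 1\<^sub>m m" and m: "1 \<le> m" "m \<le> N"
    and p: "p = 1 \<or> p = m"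
  shows "lambda p (compressed_gram H ((1 / sqrt Mt) \<cdot>\<^sub>m (T * rows_of m N (N - m + 1) u))) \<le> lambda p (compressed_gram H P)"
proof (cases "p \<le> K")
  case True
  have "lambda p (compressed_gram H ((1 / sqrt Mt) \<cdot>\<^sub>m (T * rows_of m N (N - m + 1) u)))
      \<le> rho2 (N - m + 1 + p - 1) / Mt"
    using lambda_design_le[of "N - m + 1" m T Mt p] T Mt True m p by auto
  also have "\<dots> \<le> lambda p (compressed_gram H P)"
  proof (cases "p = 1")
    case True
    thus ?thesis using lambda_first_compressed_gram_ge[OF P _ m] Mt \<open>p \<le> K\<close> by simp
  next
    case False
    hence "p = m" using p by simp
    thus ?thesis using lambda_last_compressed_gram_ge[OF P _ m(1) _ m(2)] Mt \<open>p \<le> K\<close> m by simp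
  qed
  finally show ?thesis .
qed (use H in \<open>simp add: lambda_def\<close>)

lemma PD_le_eigenvector_design:
  assumes M: "1 \<le> M1" "1 \<le> M2" "M1 + M2 \<le> N" and Nb: "1 \<le> Nb" and sig: "0 < sx2" "0 < s02"
    and Ts: "Ts \<in> carrier_mat M1 M1" "Ts * transpose_mat Ts = 1\<^sub>m M1"
    and To: "To \<in> carrier_mat M2 M2" "To * transpose_mat To = 1\<^sub>m M2"
    and adm: "admissible N M1 M2 Phis Phio"
  defines "Phis_opt \<equiv> (1 / sqrt (real (M1 + M2))) \<cdot>\<^sub>m (Ts * rows_of M1 N 1 u)"
    and "Phio_opt \<equiv> (1 / sqrt (real (M1 + M2))) \<cdot>\<^sub>m (To * rows_of M2 N (N - M2 + 1) u)"
  shows "PD_lb H sx2 s02 M1 M2 Nb PFA Phis Phio \<le> PD_lb H sx2 s02 M1 M2 Nb PFA Phis_opt Phio_opt \<and>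
    PD_ub H sx2 s02 M1 M2 Nb PFA Phis Phio \<le> PD_ub H sx2 s02 M1 M2 Nb PFA Phis_opt Phio_opt"
proof -
  let ?Mt = "real (M1 + M2)"
  have Mt: "0 < ?Mt" and d: "0 < M1 * Nb" "0 < M2 * Nb" using M Nb by auto
  have opt: "admissible N M1 M2 Phis_opt Phio_opt"
    unfolding Phis_opt_def Phio_opt_def by (rule admissible_design) (use M Ts To in auto)
  note adm = adm[unfolded admissible_iff] and opt = opt[unfolded admissible_iff]
  have signal: "lambda p (compressed_gram H Phis) \<le> lambda p (compressed_gram H Phis_opt)"
    if "1 \<le> p" "p \<le> M1" for p
    unfolding Phis_opt_def by (rule lambda_le_top_design) (use adm Mt Ts M that in auto)
  have other: "lambda p (compressed_gram H Phio_opt) \<le> lambda p (compressed_gram H Phio)"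
    if "p = 1 \<or> p = M2" for p
    unfolding Phio_opt_def by (rule lambda_bottom_design_le) (use adm Mt To M that in auto)
  have nonneg: "0 \<le> lambda p (compressed_gram H P)"
    if "P \<in> carrier_mat m N" "P * transpose_mat P = (1 / ?Mt) \<cdot>\<^sub>m 1\<^sub>m m" for p m P
    using lambda_compressed_gram_nonneg[OF that] Mt by simp
  show ?thesis
    unfolding PD_lb_def PD_ub_def eta_lb_def eta_ub_def
    using signal[of 1] signal[of M1] other[of 1] other[of M2] M nonneg adm opt
    by (intro conjI QF_ratio_antimono[OF d sig]) auto
qed

end

theorem corollary1:
  fixes N K M1 M2 Nb :: nat
    and H :: "real mat"
    and u :: "nat \<Rightarrow> real vec"
    and rho2 :: "nat \<Rightarrow> real"
    and sx2 s02 PFA :: real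
    and Ts To :: "real mat"
  assumes NK: "N \<ge> K" "K \<ge> 1"
    and H: "H \<in> carrier_mat N K" "vec_space.rank N H = K"
    and u_dim: "\<And>i. 1 \<le> i \<Longrightarrow> i \<le> N \<Longrightarrow> u i \<in> carrier_vec N"
    and u_orth: "\<And>i j. 1 \<le> i \<Longrightarrow> i \<le> N \<Longrightarrow> 1 \<le> j \<Longrightarrow> j \<le> N \<Longrightarrow>
                   u i \<bullet> u j = (if i = j then 1 else 0)"
    and u_eig: "\<And>i. 1 \<le> i \<Longrightarrow> i \<le> N \<Longrightarrow> (H * transpose_mat H) *\<^sub>v u i = rho2 i \<cdot>\<^sub>v u i"
    and rho_sorted: "\<And>i j. 1 \<le> i \<Longrightarrow> i \<le> j \<Longrightarrow> j \<le> N \<Longrightarrow> rho2 j \<le> rho2 i"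
    and rho_nonneg: "rho2 N \<ge> 0"
    and rho_strict: "rho2 1 > rho2 N"
    and M: "M1 \<ge> 1" "M2 \<ge> 1" "M1 + M2 \<le> N"
    and Nb: "Nb \<ge> 1"
    and sig: "sx2 > 0" "s02 > 0"
    and PFA: "0 < PFA" "PFA < 1"
    and Ts: "Ts \<in> carrier_mat M1 M1" "Ts * transpose_mat Ts = 1\<^sub>m M1"
    and To: "To \<in> carrier_mat M2 M2" "To * transpose_mat To = 1\<^sub>m M2"
  defines "Phis_opt \<equiv> (1 / sqrt (real (M1 + M2))) \<cdot>\<^sub>m (Ts * rows_of M1 N 1 u)"
    and "Phio_opt \<equiv> (1 / sqrt (real (M1 + M2))) \<cdot>\<^sub>m (To * rows_of M2 N (N - M2 + 1) u)"
  shows "admissible N M1 M2 Phis_opt Phio_opt \<and>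
         (\<forall>Phis Phio. admissible N M1 M2 Phis Phio \<longrightarrow>
            PD_lb H sx2 s02 M1 M2 Nb PFA Phis Phio \<le> PD_lb H sx2 s02 M1 M2 Nb PFA Phis_opt Phio_opt \<and>
            PD_ub H sx2 s02 M1 M2 Nb PFA Phis Phio \<le> PD_ub H sx2 s02 M1 M2 Nb PFA Phis_opt Phio_opt)"
proof -
  interpret gram_eigenbasis N K H u rho2
    using H u_dim u_orth u_eig rho_sorted rho_nonneg by unfold_locales auto
  show ?thesis
    unfolding Phis_opt_def Phio_opt_def
    using admissible_design[OF _ _ _ _ Ts To, of 1 "N - M2 + 1"] PD_le_eigenvector_design[OF M Nb sig Ts To] M
    by auto
qed

end
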